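(* Let $R$ be a commutative ring with $1$, $\overline{Q}$ the double quiver of a finite quiver $Q$, $Q_0'\subseteq Q_0$ a nonempty subset, $\lambda_i\in R$ for $i\in Q_0'$, and $A=R\overline{Q}/(\mu-\lambda)$. For every left $A$-module $V$, the sequence of left $A$-modules $$0\to V\xrightarrow{\epsilon}\bigoplus_{i\in Q_0}\mathrm{Hom}_R(e_iA,V_i)\xrightarrow{g}\bigoplus_{a\in\overline{Q}_1}\mathrm{Hom}_R(e_{ta}A,V_{ha})\xrightarrow{m}\bigoplus_{i\in Q_0'}\mathrm{Hom}_R(e_iA,V_i)$$ is exact, where for $p_i\in e_iA$: $\epsilon(v)(p_i)=p_iv$; $g(\kappa)_a(p_{ta})=\kappa_{ha}(a\,p_{ta})-a\,\kappa_{ta}(p_{ta})$; $m(\gamma)_i(p_i)=\sum_{a\in\overline{Q}_1:\,ta=i}(-1)^{|a|}\big(\overline{a}\,\gamma_a(p_i)+\gamma_{\overline{a}}(a\,p_i)\big)$.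
   Context: $Q$ is a finite quiver with vertex set $Q_0$, arrow set $Q_1$, tail and head maps $t,h:Q_1\to Q_0$. The double quiver $\overline{Q}$ has vertex set $Q_0$ and arrow set $\overline{Q}_1=Q_1\sqcup\{\overline{a}:a\in Q_1\}$ where $\overline{a}$ has $t\overline{a}=ha$, $h\overline{a}=ta$; set $\overline{\overline{a}}=a$. Define $|a|=0$ if $a\in Q_1$ and $|a|=1$ otherwise. A path is a word $a_1\cdots a_m$ of arrows with $ta_k=ha_{k+1}$; $hp=ha_1$, $tp=ta_m$; there is a trivial path $e_i$ with $he_i=te_i=i$ for each vertex. The path algebra $R\overline{Q}$ is the free $R$-module on paths with product $p\cdot q=pq$ (concatenation) if $tp=hq$ and $0$ otherwise, $pe_{tp}=p=e_{hp}p$. $(\mu-\lambda)$ denotes the two-sided ideal generated by the single element $\sum_{i\in Q_0'}\big(\sum_{a\in\overline{Q}_1:ha=i}(-1)^{|a|}a\overline{a}-\lambda_ie_i\big)$, and $A=R\overline{Q}/(\mu-\lambda)$. For an $A$-module $V$, $V_i:=e_iV$. The right $A$-module $e_iA$ makes $\mathrm{Hom}_R(e_iA,V_j)$ a left $A$-module via $(x\cdot\kappa)(p)=\kappa(px)$. *)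

theory Defs
  imports Main
begin

record ('v,'e) quiver =
  verts :: "'v set"
  arrs  :: "'e set"
  qtl   :: "'e \<Rightarrow> 'v"
  qhd   :: "'e \<Rightarrow> 'v"

text \<open>Arrows of the double quiver: (a, False) is a, (a, True) is bar a.\<close>
type_synonym 'e darrow = "'e \<times> bool"

definition darrs :: "('v,'e) quiver \<Rightarrow> 'e darrow set" where
  "darrs Q = arrs Q \<times> (UNIV :: bool set)"

definition dtl :: "('v,'e) quiver \<Rightarrow> 'e darrow \<Rightarrow> 'v" where
  "dtl Q a = (if snd a then qhd Q (fst a) else qtl Q (fst a))"

definition dhd :: "('v,'e) quiver \<Rightarrow> 'e darrow \<Rightarrow> 'v" where
  "dhd Q a = (if snd a then qtl Q (fst a) else qhd Q (fst a))"

definition bar :: "'e darrow \<Rightarrow> 'e darrow" where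
  "bar a = (fst a, \<not> snd a)"

definition deg :: "'e darrow \<Rightarrow> nat" where
  "deg a = (if snd a then 1 else 0)"

text \<open>A path a1...am is represented as (v, [a1,...,am]) where v is its tail vertex;
  the trivial path e_i is (i, []).\<close>
type_synonym ('v,'e) path = "'v \<times> 'e darrow list"

definition valid_path :: "('v,'e) quiver \<Rightarrow> ('v,'e) path \<Rightarrow> bool" where
  "valid_path Q p \<longleftrightarrow> fst p \<in> verts Q \<and> set (snd p) \<subseteq> darrs Q
     \<and> (\<forall>k. Suc k < length (snd p) \<longrightarrow> dtl Q (snd p ! k) = dhd Q (snd p ! Suc k))
     \<and> (snd p \<noteq> [] \<longrightarrow> dtl Q (last (snd p)) = fst p)"

definition ptail :: "('v,'e) path \<Rightarrow> 'v" where
  "ptail p = fst p"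

definition phead :: "('v,'e) quiver \<Rightarrow> ('v,'e) path \<Rightarrow> 'v" where
  "phead Q p = (if snd p = [] then fst p else dhd Q (hd (snd p)))"

definition pconcat :: "('v,'e) path \<Rightarrow> ('v,'e) path \<Rightarrow> ('v,'e) path" where
  "pconcat p q = (fst q, snd p @ snd q)"

text \<open>Elements: finitely supported R-valued functions on the (valid) paths.\<close>
type_synonym ('v,'e,'r) pel = "('v,'e) path \<Rightarrow> 'r"

definition PA :: "('v,'e) quiver \<Rightarrow> ('v,'e,'r::zero) pel set" where
  "PA Q = {x. finite {p. x p \<noteq> 0} \<and> (\<forall>p. x p \<noteq> 0 \<longrightarrow> valid_path Q p)}"

definition pmul :: "('v,'e) quiver \<Rightarrow> ('v,'e,'r::comm_ring_1) pel \<Rightarrow> ('v,'e,'r) pel \<Rightarrow> ('v,'e,'r) pel" where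
  "pmul Q x y = (\<lambda>p. \<Sum>(q1,q2) \<in> {(q1,q2). x q1 \<noteq> 0 \<and> y q2 \<noteq> 0 \<and> ptail q1 = phead Q q2
                                     \<and> pconcat q1 q2 = p}. x q1 * y q2)"

definition padd :: "('v,'e,'r::comm_ring_1) pel \<Rightarrow> ('v,'e,'r) pel \<Rightarrow> ('v,'e,'r) pel" where
  "padd x y = (\<lambda>p. x p + y p)"

definition psc :: "'r::comm_ring_1 \<Rightarrow> ('v,'e,'r) pel \<Rightarrow> ('v,'e,'r) pel" where
  "psc r x = (\<lambda>p. r * x p)"

definition basis :: "('v,'e) path \<Rightarrow> ('v,'e,'r::comm_ring_1) pel" where
  "basis p = (\<lambda>q. if q = p then 1 else 0)"

definition idem :: "'v \<Rightarrow> ('v,'e,'r::comm_ring_1) pel" where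
  "idem i = basis (i, [])"

definition arrow :: "('v,'e) quiver \<Rightarrow> 'e darrow \<Rightarrow> ('v,'e,'r::comm_ring_1) pel" where
  "arrow Q a = basis (dtl Q a, [a])"

definition one :: "('v,'e) quiver \<Rightarrow> ('v,'e,'r::comm_ring_1) pel" where
  "one Q = (\<lambda>p. \<Sum>i\<in>verts Q. idem i p)"

definition rel :: "('v,'e) quiver \<Rightarrow> 'v set \<Rightarrow> ('v \<Rightarrow> 'r::comm_ring_1) \<Rightarrow> ('v,'e,'r) pel" where
  "rel Q Q0' lam = (\<lambda>p. \<Sum>i\<in>Q0'.
      (\<Sum>a\<in>{a\<in>darrs Q. dhd Q a = i}. (-1) ^ deg a * pmul Q (arrow Q a) (arrow Q (bar a)) p)
      - lam i * idem i p)"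

inductive_set ideal_gen :: "('v,'e) quiver \<Rightarrow> ('v,'e,'r::comm_ring_1) pel \<Rightarrow> ('v,'e,'r) pel set"
  for Q r where
  gen: "r \<in> ideal_gen Q r"
| zero: "(\<lambda>_. 0) \<in> ideal_gen Q r"
| add: "x \<in> ideal_gen Q r \<Longrightarrow> y \<in> ideal_gen Q r \<Longrightarrow> padd x y \<in> ideal_gen Q r"
| lmul: "x \<in> PA Q \<Longrightarrow> y \<in> ideal_gen Q r \<Longrightarrow> pmul Q x y \<in> ideal_gen Q r"
| rmul: "x \<in> PA Q \<Longrightarrow> y \<in> ideal_gen Q r \<Longrightarrow> pmul Q y x \<in> ideal_gen Q r"

abbreviation the_ideal :: "('v,'e) quiver \<Rightarrow> 'v set \<Rightarrow> ('v \<Rightarrow> 'r::comm_ring_1) \<Rightarrow> ('v,'e,'r) pel set" where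
  "the_ideal Q Q0' lam \<equiv> ideal_gen Q (rel Q Q0' lam)"

definition pa_module :: "('v,'e) quiver \<Rightarrow> (('v,'e,'r::comm_ring_1) pel \<Rightarrow> 'm::ab_group_add \<Rightarrow> 'm) \<Rightarrow> bool" where
  "pa_module Q act \<longleftrightarrow>
     (\<forall>x\<in>PA Q. \<forall>y\<in>PA Q. \<forall>v. act (padd x y) v = act x v + act y v)
   \<and> (\<forall>x\<in>PA Q. \<forall>v w. act x (v + w) = act x v + act x w)
   \<and> (\<forall>x\<in>PA Q. \<forall>y\<in>PA Q. \<forall>v. act (pmul Q x y) v = act x (act y v))
   \<and> (\<forall>v. act (one Q) v = v)"

definition A_module :: "('v,'e) quiver \<Rightarrow> 'v set \<Rightarrow> ('v \<Rightarrow> 'r::comm_ring_1)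
    \<Rightarrow> (('v,'e,'r) pel \<Rightarrow> 'm::ab_group_add \<Rightarrow> 'm) \<Rightarrow> bool" where
  "A_module Q Q0' lam act \<longleftrightarrow> pa_module Q act \<and> (\<forall>x\<in>the_ideal Q Q0' lam. \<forall>v. act x v = 0)"

definition Vsub :: "(('v,'e,'r::comm_ring_1) pel \<Rightarrow> 'm \<Rightarrow> 'm) \<Rightarrow> 'v \<Rightarrow> 'm set" where
  "Vsub act i = range (act (idem i))"

definition rscal :: "('v,'e) quiver \<Rightarrow> (('v,'e,'r::comm_ring_1) pel \<Rightarrow> 'm \<Rightarrow> 'm) \<Rightarrow> 'r \<Rightarrow> 'm \<Rightarrow> 'm" where
  "rscal Q act r v = act (psc r (one Q)) v"

text \<open>e_i R Qbar, and e_i (mu - lambda); e_i A = e_i R Qbar / e_i (mu - lambda).\<close>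
definition eRQ :: "('v,'e) quiver \<Rightarrow> 'v \<Rightarrow> ('v,'e,'r::comm_ring_1) pel set" where
  "eRQ Q i = {x \<in> PA Q. pmul Q (idem i) x = x}"

definition eI :: "('v,'e) quiver \<Rightarrow> 'v set \<Rightarrow> ('v \<Rightarrow> 'r::comm_ring_1) \<Rightarrow> 'v \<Rightarrow> ('v,'e,'r) pel set" where
  "eI Q Q0' lam i = {x \<in> the_ideal Q Q0' lam. x \<in> PA Q \<and> pmul Q (idem i) x = x}"

definition ext_on :: "'a set \<Rightarrow> ('a \<Rightarrow> 'm::zero) \<Rightarrow> 'a \<Rightarrow> 'm" where
  "ext_on S f = (\<lambda>x. if x \<in> S then f x else 0)"

text \<open>Hom_R(e_i A, V_j): R-linear maps e_i R Qbar -> V_j vanishing on e_i (mu - lambda)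
  (i.e. factoring through e_i A), normalised to be 0 outside e_i R Qbar.\<close>
definition HomA :: "('v,'e) quiver \<Rightarrow> 'v set \<Rightarrow> ('v \<Rightarrow> 'r::comm_ring_1)
    \<Rightarrow> (('v,'e,'r) pel \<Rightarrow> 'm::ab_group_add \<Rightarrow> 'm) \<Rightarrow> 'v \<Rightarrow> 'v \<Rightarrow> (('v,'e,'r) pel \<Rightarrow> 'm) set" where
  "HomA Q Q0' lam act i j = {\<kappa>.
      (\<forall>x\<in>eRQ Q i. \<kappa> x \<in> Vsub act j)
    \<and> (\<forall>x\<in>eRQ Q i. \<forall>y\<in>eRQ Q i. \<kappa> (padd x y) = \<kappa> x + \<kappa> y)
    \<and> (\<forall>r. \<forall>x\<in>eRQ Q i. \<kappa> (psc r x) = rscal Q act r (\<kappa> x))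
    \<and> (\<forall>x\<in>eI Q Q0' lam i. \<kappa> x = 0)
    \<and> (\<forall>x. x \<notin> eRQ Q i \<longrightarrow> \<kappa> x = 0)}"

definition DSum :: "('v,'e) quiver \<Rightarrow> 'v set \<Rightarrow> ('v \<Rightarrow> 'r::comm_ring_1)
    \<Rightarrow> (('v,'e,'r) pel \<Rightarrow> 'm::ab_group_add \<Rightarrow> 'm) \<Rightarrow> 'k set \<Rightarrow> ('k \<Rightarrow> 'v) \<Rightarrow> ('k \<Rightarrow> 'v)
    \<Rightarrow> ('k \<Rightarrow> ('v,'e,'r) pel \<Rightarrow> 'm) set" where
  "DSum Q Q0' lam act K s d = {\<kappa>. (\<forall>k\<in>K. \<kappa> k \<in> HomA Q Q0' lam act (s k) (d k))
                                 \<and> (\<forall>k. k \<notin> K \<longrightarrow> \<kappa> k = (\<lambda>_. 0))}"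

definition hact :: "('v,'e) quiver \<Rightarrow> ('k \<Rightarrow> 'v) \<Rightarrow> ('v,'e,'r::comm_ring_1) pel
    \<Rightarrow> ('k \<Rightarrow> ('v,'e,'r) pel \<Rightarrow> 'm::zero) \<Rightarrow> ('k \<Rightarrow> ('v,'e,'r) pel \<Rightarrow> 'm)" where
  "hact Q s x \<kappa> = (\<lambda>k. ext_on (eRQ Q (s k)) (\<lambda>p. \<kappa> k (pmul Q p x)))"

definition dzero :: "'k \<Rightarrow> 'p \<Rightarrow> 'm::zero" where
  "dzero = (\<lambda>_ _. 0)"

definition dplus :: "('k \<Rightarrow> 'p \<Rightarrow> 'm::plus) \<Rightarrow> ('k \<Rightarrow> 'p \<Rightarrow> 'm) \<Rightarrow> ('k \<Rightarrow> 'p \<Rightarrow> 'm)" where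
  "dplus \<kappa> \<kappa>' = (\<lambda>k p. \<kappa> k p + \<kappa>' k p)"

definition epsmap :: "('v,'e) quiver \<Rightarrow> (('v,'e,'r::comm_ring_1) pel \<Rightarrow> 'm::ab_group_add \<Rightarrow> 'm)
    \<Rightarrow> 'm \<Rightarrow> ('v \<Rightarrow> ('v,'e,'r) pel \<Rightarrow> 'm)" where
  "epsmap Q act v = (\<lambda>i. if i \<in> verts Q then ext_on (eRQ Q i) (\<lambda>p. act p v) else (\<lambda>_. 0))"

definition gmap :: "('v,'e) quiver \<Rightarrow> (('v,'e,'r::comm_ring_1) pel \<Rightarrow> 'm::ab_group_add \<Rightarrow> 'm)
    \<Rightarrow> ('v \<Rightarrow> ('v,'e,'r) pel \<Rightarrow> 'm) \<Rightarrow> ('e darrow \<Rightarrow> ('v,'e,'r) pel \<Rightarrow> 'm)" where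
  "gmap Q act \<kappa> = (\<lambda>a. if a \<in> darrs Q then
       ext_on (eRQ Q (dtl Q a))
         (\<lambda>p. \<kappa> (dhd Q a) (pmul Q (arrow Q a) p) - act (arrow Q a) (\<kappa> (dtl Q a) p))
     else (\<lambda>_. 0))"

definition mmap :: "('v,'e) quiver \<Rightarrow> 'v set \<Rightarrow> (('v,'e,'r::comm_ring_1) pel \<Rightarrow> 'm::ab_group_add \<Rightarrow> 'm)
    \<Rightarrow> ('e darrow \<Rightarrow> ('v,'e,'r) pel \<Rightarrow> 'm) \<Rightarrow> ('v \<Rightarrow> ('v,'e,'r) pel \<Rightarrow> 'm)" where
  "mmap Q Q0' act \<gamma> = (\<lambda>i. if i \<in> Q0' then
       ext_on (eRQ Q i)
         (\<lambda>p. \<Sum>a\<in>{a\<in>darrs Q. dtl Q a = i}.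
               rscal Q act ((-1) ^ deg a)
                 (act (arrow Q (bar a)) (\<gamma> a p) + \<gamma> (bar a) (pmul Q (arrow Q a) p)))
     else (\<lambda>_. 0))"

end

theory Submission
  imports Defs "HOL-Library.Function_Algebras"
begin

(* Exactness: epsilon is injective as 1 = sum_i e_i; a kernel element of g is determined along paths
   by its values at the e_j, hence lies in the image of epsilon; m o g = 0 since rho_i acts as zero.
   Finally, for gamma with m gamma = 0 the map defined on paths by kappa(a p) = a kappa(p) + gamma_a(p)
   kills the ideal (m gamma = 0 compensates rho_i exactly), and g kappa = gamma. *)

text \<open>Paths are pairs (tail vertex, arrow list); they are kept unsplit by the simplifier so that
  facts about valid paths apply to them directly.\<close>
declare split_paired_All[simp del] split_paired_Ex[simp del]

section \<open>Paths in the double quiver\<close>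

lemma bar_bar[simp]: "bar (bar a) = a" by (simp add: bar_def)
lemma darrs_bar[simp]: "bar a \<in> darrs Q \<longleftrightarrow> a \<in> darrs Q" by (cases a) (auto simp: bar_def darrs_def)
lemma dtl_bar[simp]: "dtl Q (bar a) = dhd Q a" by (simp add: dtl_def dhd_def bar_def)
lemma dhd_bar[simp]: "dhd Q (bar a) = dtl Q a" by (simp add: dtl_def dhd_def bar_def)

lemma sign_bar: "((-1::'r::comm_ring_1) ^ deg (bar a)) = - ((-1) ^ deg a)"
  by (simp add: deg_def bar_def)

lemma sum_bar: "(\<Sum>b\<in>{b\<in>darrs Q. dtl Q b = i}. F b) = (\<Sum>a\<in>{a\<in>darrs Q. dhd Q a = i}. F (bar a))"
  by (rule sum.reindex_bij_witness[where i=bar and j=bar]) auto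

lemma valid_Nil: "valid_path Q (v, []) \<longleftrightarrow> v \<in> verts Q"
  by (simp add: valid_path_def)

lemma chain_Cons:
  "(\<forall>k. Suc k < length (a#l) \<longrightarrow> P ((a#l) ! k) ((a#l) ! Suc k)) \<longleftrightarrow>
     (l \<noteq> [] \<longrightarrow> P a (hd l)) \<and> (\<forall>k. Suc k < length l \<longrightarrow> P (l ! k) (l ! Suc k))"
  (is "?L \<longleftrightarrow> ?R")
proof
  assume H: ?L
  have "l \<noteq> [] \<longrightarrow> P a (hd l)" using H[rule_format, of 0] by (cases l) auto
  moreover have "\<forall>k. Suc k < length l \<longrightarrow> P (l ! k) (l ! Suc k)"
    using H by (metis Suc_less_eq length_Cons nth_Cons_Suc)
  ultimately show ?R by blast
next
  assume R: ?R
  show ?L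
  proof (intro allI impI)
    fix k assume k: "Suc k < length (a#l)"
    show "P ((a#l) ! k) ((a#l) ! Suc k)"
      using R k by (cases k; cases l) auto
  qed
qed

lemma valid_Cons: "valid_path Q (v, a # l) \<longleftrightarrow>
   a \<in> darrs Q \<and> valid_path Q (v, l) \<and> dtl Q a = phead Q (v, l)"
  unfolding valid_path_def phead_def using chain_Cons[where P="\<lambda>x y. dtl Q x = dhd Q y" and a=a and l=l]
  by (cases l) auto

lemma pconcat_simps[simp]: "ptail (pconcat p q) = ptail q" "fst (pconcat p q) = fst q"
  "snd (pconcat p q) = snd p @ snd q"
  by (auto simp: pconcat_def ptail_def)

lemma phead_concat: "ptail p = phead Q q \<Longrightarrow> phead Q (pconcat p q) = phead Q p"
  by (auto simp: phead_def pconcat_def ptail_def)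

lemma pconcat_assoc: "pconcat (pconcat p q) r = pconcat p (pconcat q r)"
  by (simp add: pconcat_def)

lemma valid_concat:
  assumes "valid_path Q p" "valid_path Q q" "ptail p = phead Q q"
  shows "valid_path Q (pconcat p q)"
  using assms
proof (induction "snd p" arbitrary: p)
  case Nil
  then show ?case by (cases p) (simp add: pconcat_def)
next
  case (Cons a l)
  obtain v where p: "p = (v, a # l)" using Cons(2) by (cases p) auto
  have vl: "valid_path Q (v, l)" "a \<in> darrs Q" "dtl Q a = phead Q (v, l)"
    using Cons(3) p valid_Cons by fastforce+
  have IH: "valid_path Q (pconcat (v,l) q)"
    using Cons(1)[of "(v,l)"] vl Cons(4,5) p by (simp add: ptail_def)
  have "phead Q (pconcat (v,l) q) = phead Q (v,l)"
    using phead_concat[of "(v,l)" Q q] Cons(5) p by (simp add: ptail_def)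
  then show ?case using IH vl p
    by (simp add: pconcat_def valid_Cons)
qed

section \<open>Finitely supported functions and the convolution product\<close>

lemma sum_fun_apply: "(\<Sum>k\<in>K. f k) p = (\<Sum>k\<in>K. f k p)"
  by (induction K rule: infinite_finite_induct) auto

lemma padd_eq: "padd x y = x + y" by (simp add: padd_def plus_fun_def)

definition supp :: "('a \<Rightarrow> 'b::zero) \<Rightarrow> 'a set" where "supp x = {p. x p \<noteq> 0}"

abbreviation fs :: "('a \<Rightarrow> 'b::zero) \<Rightarrow> bool" where "fs x \<equiv> finite (supp x)"

lemma supp_add: "supp ((x::_\<Rightarrow>_::monoid_add) + y) \<subseteq> supp x \<union> supp y" by (auto simp: supp_def)
lemma supp_psc: "supp (psc r x) \<subseteq> supp x" by (auto simp: supp_def psc_def)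
lemma supp_basis: "supp (basis p) \<subseteq> {p}" by (auto simp: supp_def basis_def)

lemma fs_add: "fs x \<Longrightarrow> fs (y::_\<Rightarrow>_::monoid_add) \<Longrightarrow> fs (x + y)"
  by (rule finite_subset[OF supp_add]) simp
lemma fs_psc: "fs x \<Longrightarrow> fs (psc r x)" by (rule finite_subset[OF supp_psc])
lemma fs_basis: "fs (basis p)" by (rule finite_subset[OF supp_basis]) simp
lemma fs_zero: "fs 0" by (simp add: supp_def)
lemma fs_idem: "fs (idem i)" by (simp add: idem_def fs_basis)
lemma fs_arrow: "fs (arrow Q a)" by (simp add: arrow_def fs_basis)
lemma fs_sum: "(\<And>k. k \<in> K \<Longrightarrow> fs (f k)) \<Longrightarrow> fs (\<Sum>k\<in>K. (f k::_\<Rightarrow>_::comm_monoid_add))"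
proof (induction K rule: infinite_finite_induct)
  case (insert a F)
  have "fs (f a + sum f F)" by (rule fs_add) (use insert in auto)
  then show ?case by (simp only: sum.insert[OF insert(1,2)])
qed (simp_all add: fs_zero)

lemma pmul_eq:
  assumes "finite S" "finite T" "supp x \<subseteq> S" "supp y \<subseteq> T"
  shows "pmul Q x y p = (\<Sum>q1\<in>S. \<Sum>q2\<in>T. if ptail q1 = phead Q q2 \<and> pconcat q1 q2 = p then x q1 * y q2 else 0)"
proof -
  have "pmul Q x y p = (\<Sum>(q1,q2)\<in>S\<times>T. if ptail q1 = phead Q q2 \<and> pconcat q1 q2 = p then x q1 * y q2 else 0)"
    unfolding pmul_def
    by (rule sum.mono_neutral_cong_left) (use assms in \<open>auto simp: supp_def split: if_splits\<close>)
  then show ?thesis by (simp add: sum.cartesian_product)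
qed

lemma supp_pmul: "supp (pmul Q x y) \<subseteq> (\<lambda>(q1,q2). pconcat q1 q2) ` (supp x \<times> supp y)"
proof
  fix p assume "p \<in> supp (pmul Q x y)"
  then have "pmul Q x y p \<noteq> 0" by (simp add: supp_def)
  then have "{(q1,q2). x q1 \<noteq> 0 \<and> y q2 \<noteq> 0 \<and> ptail q1 = phead Q q2 \<and> pconcat q1 q2 = p} \<noteq> {}"
    unfolding pmul_def by (intro notI) simp
  then obtain q1 q2 where "x q1 \<noteq> 0" "y q2 \<noteq> 0" "pconcat q1 q2 = p"
    by blast
  then show "p \<in> (\<lambda>(q1,q2). pconcat q1 q2) ` (supp x \<times> supp y)"
    by (intro rev_image_eqI[of "(q1,q2)"]) (auto simp: supp_def)
qed

lemma fs_pmul: "fs x \<Longrightarrow> fs y \<Longrightarrow> fs (pmul Q x y)"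
  by (rule finite_subset[OF supp_pmul]) (intro finite_imageI finite_cartesian_product)

lemmas fs_simps = fs_basis fs_psc fs_pmul fs_sum fs_idem fs_arrow fs_zero fs_add

lemma pmul_zero_left[simp]: "pmul Q 0 y = 0" by (auto simp: pmul_def zero_fun_def)
lemma pmul_zero_right[simp]: "pmul Q x 0 = 0" by (auto simp: pmul_def zero_fun_def)

lemma pmul_add_left:
  assumes "fs x" "fs y" "fs z"
  shows "pmul Q (x + y) z = pmul Q x z + pmul Q y z"
proof
  fix p
  let ?S = "supp x \<union> supp y" and ?T = "supp z"
  let ?c = "\<lambda>q1 q2. ptail q1 = phead Q q2 \<and> pconcat q1 q2 = p"
  have e: "pmul Q u z p = (\<Sum>q1\<in>?S. \<Sum>q2\<in>?T. if ?c q1 q2 then u q1 * z q2 else 0)"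
    if "supp u \<subseteq> ?S" for u
    by (rule pmul_eq) (use assms that in auto)
  have "pmul Q (x + y) z p = (\<Sum>q1\<in>?S. \<Sum>q2\<in>?T. if ?c q1 q2 then (x + y) q1 * z q2 else 0)"
    by (rule e[OF supp_add])
  also have "\<dots> = (\<Sum>q1\<in>?S. \<Sum>q2\<in>?T.
      (if ?c q1 q2 then x q1 * z q2 else 0) + (if ?c q1 q2 then y q1 * z q2 else 0))"
    unfolding plus_fun_apply distrib_right by (intro sum.cong refl) simp
  also have "\<dots> = pmul Q x z p + pmul Q y z p"
    by (simp only: sum.distrib e[of x, OF Un_upper1] e[of y, OF Un_upper2])
  finally show "pmul Q (x + y) z p = (pmul Q x z + pmul Q y z) p" by simp
qed

lemma pmul_add_right:
  assumes "fs x" "fs y" "fs z"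
  shows "pmul Q z (x + y) = pmul Q z x + pmul Q z y"
proof
  fix p
  let ?S = "supp x \<union> supp y" and ?T = "supp z"
  let ?c = "\<lambda>q1 q2. ptail q1 = phead Q q2 \<and> pconcat q1 q2 = p"
  have e: "pmul Q z u p = (\<Sum>q1\<in>?T. \<Sum>q2\<in>?S. if ?c q1 q2 then z q1 * u q2 else 0)"
    if "supp u \<subseteq> ?S" for u
    by (rule pmul_eq) (use assms that in auto)
  have "pmul Q z (x + y) p = (\<Sum>q1\<in>?T. \<Sum>q2\<in>?S. if ?c q1 q2 then z q1 * (x + y) q2 else 0)"
    by (rule e[OF supp_add])
  also have "\<dots> = (\<Sum>q1\<in>?T. \<Sum>q2\<in>?S.
      (if ?c q1 q2 then z q1 * x q2 else 0) + (if ?c q1 q2 then z q1 * y q2 else 0))"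
    unfolding plus_fun_apply distrib_left by (intro sum.cong refl) simp
  also have "\<dots> = pmul Q z x p + pmul Q z y p"
    by (simp only: sum.distrib e[of x, OF Un_upper1] e[of y, OF Un_upper2])
  finally show "pmul Q z (x + y) p = (pmul Q z x + pmul Q z y) p" by simp
qed

lemma pmul_psc_left:
  assumes "fs x" "fs y"
  shows "pmul Q (psc r x) y = psc r (pmul Q x y)"
proof
  fix p
  have e: "pmul Q u y p = (\<Sum>q1\<in>supp x. \<Sum>q2\<in>supp y. if ptail q1 = phead Q q2 \<and> pconcat q1 q2 = p then u q1 * y q2 else 0)"
    if "supp u \<subseteq> supp x" for u
    by (rule pmul_eq) (use assms that in auto)
  show "pmul Q (psc r x) y p = psc r (pmul Q x y) p"
    unfolding psc_def[of r "pmul Q x y"] e[OF supp_psc] e[OF subset_refl] sum_distrib_left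
    by (intro sum.cong refl) (simp add: psc_def mult.assoc)
qed

lemma pmul_psc_right:
  assumes "fs x" "fs y"
  shows "pmul Q x (psc r y) = psc r (pmul Q x y)"
proof
  fix p
  have e: "pmul Q x u p = (\<Sum>q1\<in>supp x. \<Sum>q2\<in>supp y. if ptail q1 = phead Q q2 \<and> pconcat q1 q2 = p then x q1 * u q2 else 0)"
    if "supp u \<subseteq> supp y" for u
    by (rule pmul_eq) (use assms that in auto)
  show "pmul Q x (psc r y) p = psc r (pmul Q x y) p"
    unfolding psc_def[of r "pmul Q x y"] e[OF supp_psc] e[OF subset_refl] sum_distrib_left
    by (intro sum.cong refl) (simp add: psc_def mult.left_commute)
qed

lemma pmul_sum_left:
  assumes "\<And>k. k \<in> K \<Longrightarrow> fs (f k)" "fs y"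
  shows "pmul Q (\<Sum>k\<in>K. f k) y = (\<Sum>k\<in>K. pmul Q (f k) y)"
  using assms
proof (induction K rule: infinite_finite_induct)
  case (insert a F)
  have "pmul Q (f a + sum f F) y = pmul Q (f a) y + pmul Q (sum f F) y"
    by (rule pmul_add_left) (use insert.prems in \<open>simp_all add: fs_sum\<close>)
  then show ?case using insert by (simp only: sum.insert[OF insert(1,2)]) simp
qed simp_all

lemma pmul_sum_right:
  assumes "\<And>k. k \<in> K \<Longrightarrow> fs (f k)" "fs y"
  shows "pmul Q y (\<Sum>k\<in>K. f k) = (\<Sum>k\<in>K. pmul Q y (f k))"
  using assms
proof (induction K rule: infinite_finite_induct)
  case (insert a F)
  have "pmul Q y (f a + sum f F) = pmul Q y (f a) + pmul Q y (sum f F)"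
    by (rule pmul_add_right) (use insert.prems in \<open>simp_all add: fs_sum\<close>)
  then show ?case using insert by (simp only: sum.insert[OF insert(1,2)]) simp
qed simp_all

lemma pmul_sum_psc_left:
  assumes "\<And>k. k \<in> K \<Longrightarrow> fs (f k)" "fs y"
  shows "pmul Q (\<Sum>k\<in>K. psc (c k) (f k)) y = (\<Sum>k\<in>K. psc (c k) (pmul Q (f k) y))"
  by (subst pmul_sum_left) (auto simp: fs_simps assms pmul_psc_left intro!: sum.cong)

lemma pmul_sum_psc_right:
  assumes "\<And>k. k \<in> K \<Longrightarrow> fs (f k)" "fs y"
  shows "pmul Q y (\<Sum>k\<in>K. psc (c k) (f k)) = (\<Sum>k\<in>K. psc (c k) (pmul Q y (f k)))"
  by (subst pmul_sum_right) (auto simp: fs_simps assms pmul_psc_right intro!: sum.cong)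

lemma basis_apply: "basis q p = (if p = q then 1 else 0)" by (simp add: basis_def)

lemma pmul_basis:
  "pmul Q (basis q) (basis r) = (if ptail q = phead Q r then basis (pconcat q r) else 0)"
proof
  fix p
  have "pmul Q (basis q) (basis r) p = (\<Sum>q1\<in>{q}. \<Sum>q2\<in>{r}. if ptail q1 = phead Q q2 \<and> pconcat q1 q2 = p then basis q q1 * basis r q2 else 0)"
    by (rule pmul_eq) (auto simp: supp_basis)
  then show "pmul Q (basis q) (basis r) p = (if ptail q = phead Q r then basis (pconcat q r) else 0) p"
    by (auto simp: basis_apply)
qed

lemma expand: "fs x \<Longrightarrow> x = (\<Sum>q\<in>supp x. psc (x q) (basis q))"
proof
  fix p assume A: "fs x"
  have "(\<Sum>q\<in>supp x. psc (x q) (basis q)) p = (\<Sum>q\<in>supp x. if q = p then x q else 0)"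
    unfolding sum_fun_apply psc_def basis_apply by (rule sum.cong) auto
  also have "\<dots> = (if p \<in> supp x then x p else 0)" using A by (rule sum.delta)
  finally show "x p = (\<Sum>q\<in>supp x. psc (x q) (basis q)) p" by (auto simp: supp_def)
qed

lemma pmul_expand_left:
  assumes "fs x" "fs y"
  shows "pmul Q x y = (\<Sum>q\<in>supp x. psc (x q) (pmul Q (basis q) y))"
proof -
  have "pmul Q x y = pmul Q (\<Sum>q\<in>supp x. psc (x q) (basis q)) y"
    using expand[OF assms(1)] by (rule arg_cong)
  also have "\<dots> = (\<Sum>q\<in>supp x. psc (x q) (pmul Q (basis q) y))"
    by (rule pmul_sum_psc_left) (simp_all add: fs_simps assms)
  finally show ?thesis .
qed

lemma pmul_expand_right:
  assumes "fs x" "fs y"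
  shows "pmul Q x y = (\<Sum>r\<in>supp y. psc (y r) (pmul Q x (basis r)))"
proof -
  have "pmul Q x y = pmul Q x (\<Sum>r\<in>supp y. psc (y r) (basis r))"
    using expand[OF assms(2)] by (rule arg_cong)
  also have "\<dots> = (\<Sum>r\<in>supp y. psc (y r) (pmul Q x (basis r)))"
    by (rule pmul_sum_psc_right) (simp_all add: fs_simps assms)
  finally show ?thesis .
qed

text \<open>Associativity, reduced by bilinearity to basis elements where it is associativity of
  concatenation: first in the third factor, then in the second, then in the first.\<close>
lemma pmul_assoc_basis2:
  assumes "fs z"
  shows "pmul Q (pmul Q (basis q) (basis r)) z = pmul Q (basis q) (pmul Q (basis r) z)"
proof -
  have bassoc: "pmul Q (pmul Q (basis q) (basis r)) (basis s) = pmul Q (basis q) (pmul Q (basis r) (basis s))" for s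
    by (auto simp: pmul_basis pconcat_assoc phead_concat)
  have "pmul Q (pmul Q (basis q) (basis r)) z = (\<Sum>s\<in>supp z. psc (z s) (pmul Q (pmul Q (basis q) (basis r)) (basis s)))"
    by (rule pmul_expand_right) (simp_all add: fs_simps assms)
  also have "\<dots> = pmul Q (basis q) (\<Sum>s\<in>supp z. psc (z s) (pmul Q (basis r) (basis s)))"
    unfolding bassoc by (rule pmul_sum_psc_right[symmetric]) (simp_all add: fs_simps)
  also have "(\<Sum>s\<in>supp z. psc (z s) (pmul Q (basis r) (basis s))) = pmul Q (basis r) z"
    by (rule pmul_expand_right[symmetric]) (simp_all add: fs_simps assms)
  finally show ?thesis .
qed

lemma pmul_assoc_basis1:
  assumes "fs y" "fs z"
  shows "pmul Q (pmul Q (basis q) y) z = pmul Q (basis q) (pmul Q y z)"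
proof -
  have "pmul Q (pmul Q (basis q) y) z = pmul Q (\<Sum>r\<in>supp y. psc (y r) (pmul Q (basis q) (basis r))) z"
    by (subst pmul_expand_right) (simp_all add: fs_simps assms)
  also have "\<dots> = (\<Sum>r\<in>supp y. psc (y r) (pmul Q (basis q) (pmul Q (basis r) z)))"
    by (simp add: pmul_sum_psc_left fs_simps assms pmul_assoc_basis2)
  also have "\<dots> = pmul Q (basis q) (\<Sum>r\<in>supp y. psc (y r) (pmul Q (basis r) z))"
    by (rule pmul_sum_psc_right[symmetric]) (simp_all add: fs_simps assms)
  also have "(\<Sum>r\<in>supp y. psc (y r) (pmul Q (basis r) z)) = pmul Q y z"
    by (rule pmul_expand_left[symmetric]) (simp_all add: fs_simps assms)
  finally show ?thesis .
qed

lemma pmul_assoc: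
  assumes "fs x" "fs y" "fs z"
  shows "pmul Q (pmul Q x y) z = pmul Q x (pmul Q y z)"
proof -
  have "pmul Q (pmul Q x y) z = pmul Q (\<Sum>q\<in>supp x. psc (x q) (pmul Q (basis q) y)) z"
    by (subst pmul_expand_left) (simp_all add: fs_simps assms)
  also have "\<dots> = (\<Sum>q\<in>supp x. psc (x q) (pmul Q (basis q) (pmul Q y z)))"
    by (simp add: pmul_sum_psc_left fs_simps assms pmul_assoc_basis1)
  also have "\<dots> = pmul Q x (pmul Q y z)"
    by (rule pmul_expand_left[symmetric]) (simp_all add: fs_simps assms)
  finally show ?thesis .
qed

section \<open>The path algebra: paths, idempotents and arrows\<close>

lemma PA_iff: "x \<in> PA Q \<longleftrightarrow> fs x \<and> (\<forall>p\<in>supp x. valid_path Q p)"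
  by (auto simp: PA_def supp_def)

lemma PA_fs: "x \<in> PA Q \<Longrightarrow> fs x" by (simp add: PA_iff)

lemma PA_zero: "0 \<in> PA Q" by (simp add: PA_iff supp_def)
lemma PA_add: "(x::(_,_,_::comm_ring_1) pel) \<in> PA Q \<Longrightarrow> y \<in> PA Q \<Longrightarrow> x + y \<in> PA Q"
  unfolding PA_iff using supp_add[of x y] fs_add[of x y] by blast
lemma PA_psc: "x \<in> PA Q \<Longrightarrow> psc r x \<in> PA Q"
  unfolding PA_iff using supp_psc[of r x] fs_psc[of x r] by blast
lemma PA_basis: "valid_path Q p \<Longrightarrow> basis p \<in> PA Q"
  unfolding PA_iff using supp_basis[of p] fs_basis[of p] by blast
lemma PA_sum: "(\<And>k. k \<in> K \<Longrightarrow> f k \<in> PA Q) \<Longrightarrow> (\<Sum>k\<in>K. (f k::(_,_,_::comm_ring_1) pel)) \<in> PA Q"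
proof (induction K rule: infinite_finite_induct)
  case (insert a F)
  have "f a + sum f F \<in> PA Q" by (rule PA_add) (use insert in auto)
  then show ?case by (simp only: sum.insert[OF insert(1,2)])
qed (simp_all add: PA_zero)

text \<open>PA Q is closed under the product since concatenation of valid paths is valid.\<close>
lemma PA_pmul: "x \<in> PA Q \<Longrightarrow> y \<in> PA Q \<Longrightarrow> pmul Q x y \<in> PA Q"
proof -
  assume x: "x \<in> PA Q" and y: "y \<in> PA Q"
  have "valid_path Q p" if "p \<in> supp (pmul Q x y)" for p
  proof -
    have "pmul Q x y p \<noteq> 0" using that by (simp add: supp_def)
    then have "{(q1,q2). x q1 \<noteq> 0 \<and> y q2 \<noteq> 0 \<and> ptail q1 = phead Q q2 \<and> pconcat q1 q2 = p} \<noteq> {}"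
      unfolding pmul_def by (intro notI) simp
    then obtain q1 q2 where "x q1 \<noteq> 0" "y q2 \<noteq> 0" "ptail q1 = phead Q q2" "pconcat q1 q2 = p"
      by blast
    moreover have "valid_path Q q1" using x \<open>x q1 \<noteq> 0\<close> unfolding PA_def by blast
    moreover have "valid_path Q q2" using y \<open>y q2 \<noteq> 0\<close> unfolding PA_def by blast
    ultimately show ?thesis using valid_concat[of Q q1 q2] by simp
  qed
  then show ?thesis using x y by (simp add: PA_iff fs_pmul)
qed

lemma pmul_idem_left:
  assumes "fs x"
  shows "pmul Q (idem i) x = (\<lambda>p. if phead Q p = i then x p else 0)"
proof
  fix p
  have "pmul Q (idem i) x p = (\<Sum>q1\<in>{(i,[])}. \<Sum>q2\<in>supp x. if ptail q1 = phead Q q2 \<and> pconcat q1 q2 = p then idem i q1 * x q2 else 0)"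
    by (rule pmul_eq) (auto simp: assms idem_def supp_basis)
  also have "\<dots> = (\<Sum>q2\<in>supp x. if q2 = p then (if phead Q q2 = i then x q2 else 0) else 0)"
    by (auto simp: idem_def basis_apply ptail_def pconcat_def intro!: sum.cong)
  also have "\<dots> = (if p \<in> supp x then (if phead Q p = i then x p else 0) else 0)"
    using assms by (rule sum.delta)
  finally show "pmul Q (idem i) x p = (if phead Q p = i then x p else 0)"
    by (auto simp: supp_def)
qed

lemma pmul_idem_right:
  assumes "fs x"
  shows "pmul Q x (idem j) = (\<lambda>p. if fst p = j then x p else 0)"
proof
  fix p
  have "pmul Q x (idem j) p = (\<Sum>q1\<in>supp x. \<Sum>q2\<in>{(j,[])}. if ptail q1 = phead Q q2 \<and> pconcat q1 q2 = p then x q1 * idem j q2 else 0)"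
    by (rule pmul_eq) (auto simp: assms idem_def supp_basis)
  also have "\<dots> = (\<Sum>q1\<in>supp x. if q1 = p then (if fst q1 = j then x q1 else 0) else 0)"
    by (rule sum.cong[OF refl]) (auto simp: idem_def basis_apply ptail_def pconcat_def phead_def)
  also have "\<dots> = (if p \<in> supp x then (if fst p = j then x p else 0) else 0)"
    using assms by (rule sum.delta)
  finally show "pmul Q x (idem j) p = (if fst p = j then x p else 0)"
    by (auto simp: supp_def)
qed

lemma pmul_idem_idem: "pmul Q (idem i) (idem j) = (if i = j then idem i else 0)"
  by (auto simp: idem_def pmul_basis ptail_def phead_def pconcat_def)

lemma one_eq: "one Q = (\<Sum>i\<in>verts Q. idem i)"
  by (rule ext) (simp add: one_def sum_fun_apply)

lemma arrow_basis:
  "dtl Q a = phead Q (j, l) \<Longrightarrow> pmul Q (arrow Q a) (basis (j, l)) = basis (j, a # l)"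
  by (simp add: arrow_def pmul_basis ptail_def pconcat_def)

locale finite_quiver =
  fixes Q :: "('v,'e) quiver"
  assumes fin_verts: "finite (verts Q)" and fin_arrs: "finite (arrs Q)"
    and ends: "\<forall>a\<in>arrs Q. qtl Q a \<in> verts Q \<and> qhd Q a \<in> verts Q"
begin

lemma darrs_ends: "a \<in> darrs Q \<Longrightarrow> dtl Q a \<in> verts Q \<and> dhd Q a \<in> verts Q"
  using ends by (cases a) (auto simp: darrs_def dtl_def dhd_def)

lemma valid_phead: "valid_path Q p \<Longrightarrow> phead Q p \<in> verts Q"
  by (cases p; cases "snd p") (auto simp: valid_Nil valid_Cons phead_def dest: darrs_ends)

lemma valid_fst: "valid_path Q p \<Longrightarrow> fst p \<in> verts Q"
  by (simp add: valid_path_def)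

lemma PA_idem: "i \<in> verts Q \<Longrightarrow> idem i \<in> PA Q"
  by (simp add: idem_def PA_basis valid_Nil)

lemma valid_arrow: "a \<in> darrs Q \<Longrightarrow> valid_path Q (dtl Q a, [a])"
  by (simp add: valid_Cons valid_Nil darrs_ends phead_def)

lemma PA_arrow: "a \<in> darrs Q \<Longrightarrow> arrow Q a \<in> PA Q"
  by (simp add: arrow_def PA_basis valid_arrow)

lemma PA_one: "one Q \<in> PA Q"
  unfolding one_eq by (rule PA_sum) (simp add: PA_idem)

lemma pmul_one_left: "x \<in> PA Q \<Longrightarrow> pmul Q (one Q) x = x"
proof
  fix p assume x: "x \<in> PA Q"
  have "pmul Q (one Q) x = (\<Sum>i\<in>verts Q. pmul Q (idem i) x)"
    unfolding one_eq by (rule pmul_sum_left) (simp_all add: fs_idem PA_fs[OF x])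
  then have "pmul Q (one Q) x p = (\<Sum>i\<in>verts Q. if i = phead Q p then x p else 0)"
    by (simp add: sum_fun_apply pmul_idem_left PA_fs[OF x] eq_commute)
  also have "\<dots> = (if phead Q p \<in> verts Q then x p else 0)" using fin_verts by (rule sum.delta)
  also have "\<dots> = x p" using x valid_phead[of p] by (auto simp: PA_def)
  finally show "pmul Q (one Q) x p = x p" .
qed

lemma pmul_one_right: "x \<in> PA Q \<Longrightarrow> pmul Q x (one Q) = x"
proof
  fix p assume x: "x \<in> PA Q"
  have "pmul Q x (one Q) = (\<Sum>i\<in>verts Q. pmul Q x (idem i))"
    unfolding one_eq by (rule pmul_sum_right) (simp_all add: fs_idem PA_fs[OF x])
  then have "pmul Q x (one Q) p = (\<Sum>i\<in>verts Q. if i = fst p then x p else 0)"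
    by (simp add: sum_fun_apply pmul_idem_right PA_fs[OF x] eq_commute)
  also have "\<dots> = (if fst p \<in> verts Q then x p else 0)" using fin_verts by (rule sum.delta)
  also have "\<dots> = x p" using x valid_fst[of p] by (auto simp: PA_def)
  finally show "pmul Q x (one Q) p = x p" .
qed

lemma psc_pmul_one: "x \<in> PA Q \<Longrightarrow> psc r x = pmul Q (psc r (one Q)) x"
proof -
  assume x: "x \<in> PA Q"
  have "pmul Q (psc r (one Q)) x = psc r (pmul Q (one Q) x)"
    by (rule pmul_psc_left) (simp_all add: PA_fs[OF PA_one] PA_fs[OF x])
  then show ?thesis by (simp add: pmul_one_left x)
qed

lemma psc_pmul_one_right: "x \<in> PA Q \<Longrightarrow> psc r x = pmul Q x (psc r (one Q))"
proof -
  assume x: "x \<in> PA Q"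
  have "pmul Q x (psc r (one Q)) = psc r (pmul Q x (one Q))"
    by (rule pmul_psc_right) (simp_all add: PA_fs[OF PA_one] PA_fs[OF x])
  then show ?thesis by (simp add: pmul_one_right x)
qed

lemma pmul_assoc_PA:
  "x \<in> PA Q \<Longrightarrow> y \<in> PA Q \<Longrightarrow> z \<in> PA Q \<Longrightarrow> pmul Q (pmul Q x y) z = pmul Q x (pmul Q y z)"
  by (rule pmul_assoc) (simp_all add: PA_fs)

lemma eRQ_iff: "x \<in> eRQ Q i \<longleftrightarrow> x \<in> PA Q \<and> (\<forall>p. x p \<noteq> 0 \<longrightarrow> phead Q p = i)"
proof
  assume "x \<in> eRQ Q i"
  then have x: "x \<in> PA Q" "pmul Q (idem i) x = x" by (auto simp: eRQ_def)
  have "phead Q p = i" if "x p \<noteq> 0" for p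
    using that x pmul_idem_left[OF PA_fs[OF x(1)], where i=i and Q=Q]
    by (metis (mono_tags, lifting))
  then show "x \<in> PA Q \<and> (\<forall>p. x p \<noteq> 0 \<longrightarrow> phead Q p = i)" using x by blast
next
  assume A: "x \<in> PA Q \<and> (\<forall>p. x p \<noteq> 0 \<longrightarrow> phead Q p = i)"
  then have "pmul Q (idem i) x = x" by (auto simp: pmul_idem_left PA_fs fun_eq_iff)
  then show "x \<in> eRQ Q i" using A by (simp add: eRQ_def)
qed

lemma eRQ_PA: "x \<in> eRQ Q i \<Longrightarrow> x \<in> PA Q" by (simp add: eRQ_def)
lemma eRQ_idem_mul: "x \<in> eRQ Q i \<Longrightarrow> pmul Q (idem i) x = x" by (simp add: eRQ_def)

lemma eRQ_supp: "x \<in> eRQ Q i \<Longrightarrow> q \<in> supp x \<Longrightarrow> valid_path Q q \<and> phead Q q = i"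
  by (auto simp: eRQ_iff supp_def PA_def)

lemma eRQ_zero: "0 \<in> eRQ Q i" by (simp add: eRQ_iff PA_zero)

lemma eRQ_add: "x \<in> eRQ Q i \<Longrightarrow> y \<in> eRQ Q i \<Longrightarrow> x + y \<in> eRQ Q i"
  unfolding eRQ_iff by (metis PA_add add.right_neutral plus_fun_apply)

lemma eRQ_psc: "x \<in> eRQ Q i \<Longrightarrow> psc r x \<in> eRQ Q i"
proof -
  assume x: "x \<in> eRQ Q i"
  have "phead Q p = i" if "psc r x p \<noteq> 0" for p
    using that x by (cases "x p = 0") (auto simp: psc_def eRQ_iff)
  then show ?thesis using x PA_psc unfolding eRQ_iff by blast
qed

lemma eRQ_sum: "(\<And>k. k \<in> K \<Longrightarrow> f k \<in> eRQ Q i) \<Longrightarrow> (\<Sum>k\<in>K. f k) \<in> eRQ Q i"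
  by (induction K rule: infinite_finite_induct) (simp_all add: eRQ_zero eRQ_add)

lemma eRQ_pmul: "x \<in> eRQ Q i \<Longrightarrow> y \<in> PA Q \<Longrightarrow> pmul Q x y \<in> eRQ Q i"
proof -
  assume x: "x \<in> eRQ Q i" and y: "y \<in> PA Q"
  have "pmul Q (idem i) (pmul Q x y) = pmul Q (pmul Q (idem i) x) y"
    by (rule pmul_assoc[symmetric]) (simp_all add: fs_idem PA_fs[OF y] PA_fs[OF eRQ_PA[OF x]])
  then show ?thesis using x y by (simp add: eRQ_def PA_pmul)
qed

lemma eRQ_basis: "valid_path Q q \<Longrightarrow> basis q \<in> eRQ Q (phead Q q)"
  by (auto simp: eRQ_iff PA_basis basis_apply)

lemma eRQ_idem: "i \<in> verts Q \<Longrightarrow> idem i \<in> eRQ Q i"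
  using eRQ_basis[of "(i,[])"] by (simp add: idem_def valid_Nil phead_def)

lemma eRQ_arrow: "a \<in> darrs Q \<Longrightarrow> arrow Q a \<in> eRQ Q (dhd Q a)"
  using eRQ_basis[OF valid_arrow, of a] by (simp add: arrow_def phead_def)

lemma eRQ_arrow_mul: "a \<in> darrs Q \<Longrightarrow> y \<in> PA Q \<Longrightarrow> pmul Q (arrow Q a) y \<in> eRQ Q (dhd Q a)"
  by (rule eRQ_pmul[OF eRQ_arrow])

lemma pmul_arrow_tl: "y \<in> PA Q \<Longrightarrow>
   pmul Q (arrow Q a) y = pmul Q (arrow Q a) (pmul Q (idem (dtl Q a)) y)"
proof -
  assume y: "y \<in> PA Q"
  have "arrow Q a = pmul Q (arrow Q a) (idem (dtl Q a))"
    by (simp add: pmul_idem_right fs_arrow) (auto simp: arrow_def basis_apply)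
  then show ?thesis
    by (metis pmul_assoc fs_arrow fs_idem PA_fs[OF y])
qed

end

section \<open>The local relations rho_i\<close>

text \<open>rho_i = sum over arrows a ending at i of (-1)^|a| a abar, minus lambda_i e_i; the generator
  of the ideal is the sum of the rho_i over Q0', and e_i times it is rho_i.\<close>
definition rho :: "('v,'e) quiver \<Rightarrow> ('v \<Rightarrow> 'r::comm_ring_1) \<Rightarrow> 'v \<Rightarrow> ('v,'e,'r) pel" where
  "rho Q lam i = (\<Sum>a\<in>{a\<in>darrs Q. dhd Q a = i}. psc ((-1) ^ deg a) (pmul Q (arrow Q a) (arrow Q (bar a))))
     + psc (- lam i) (idem i)"

lemma rel_eq: "rel Q Q0' lam = (\<Sum>i\<in>Q0'. rho Q lam i)"
  by (rule ext) (simp add: rel_def rho_def sum_fun_apply psc_def)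

context finite_quiver
begin

lemma rho_eRQ: "i \<in> verts Q \<Longrightarrow> rho Q lam i \<in> eRQ Q i"
  unfolding rho_def
  by (intro eRQ_add eRQ_psc eRQ_sum eRQ_idem) (auto intro!: eRQ_arrow_mul PA_arrow)

lemma rho_PA: "i \<in> verts Q \<Longrightarrow> rho Q lam i \<in> PA Q"
  using rho_eRQ eRQ_PA by blast

lemma idem_rel:
  assumes "i \<in> verts Q" "Q0' \<subseteq> verts Q"
  shows "pmul Q (idem i) (rel Q Q0' lam) = (if i \<in> Q0' then rho Q lam i else 0)"
proof -
  have e: "pmul Q (idem i) (rho Q lam j) = (if j = i then rho Q lam i else 0)" if "j \<in> verts Q" for j
  proof -
    have "pmul Q (idem i) (rho Q lam j) = pmul Q (pmul Q (idem i) (idem j)) (rho Q lam j)"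
      using eRQ_idem_mul[OF rho_eRQ[OF that]] pmul_assoc[OF fs_idem fs_idem PA_fs[OF rho_PA[OF that]]]
      by metis
    then show ?thesis using eRQ_idem_mul[OF rho_eRQ[OF that]]
      by (cases "j = i") (simp_all add: pmul_idem_idem)
  qed
  have "pmul Q (idem i) (rel Q Q0' lam) = (\<Sum>j\<in>Q0'. pmul Q (idem i) (rho Q lam j))"
    unfolding rel_eq
    by (rule pmul_sum_right) (use assms in \<open>auto intro!: PA_fs rho_PA simp: fs_idem\<close>)
  also have "\<dots> = (\<Sum>j\<in>Q0'. if j = i then rho Q lam i else 0)"
    using assms(2) by (intro sum.cong refl e) auto
  also have "\<dots> = (if i \<in> Q0' then rho Q lam i else 0)"
    using finite_subset[OF assms(2) fin_verts] by (simp add: sum.delta)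
  finally show ?thesis .
qed

lemma rho_pmul:
  assumes i: "i \<in> verts Q" and p: "p \<in> PA Q"
  shows "pmul Q (rho Q lam i) p =
     (\<Sum>a\<in>{a\<in>darrs Q. dhd Q a = i}. psc ((-1) ^ deg a) (pmul Q (arrow Q a) (pmul Q (arrow Q (bar a)) p)))
     + psc (- lam i) (pmul Q (idem i) p)"
proof -
  let ?A = "{a\<in>darrs Q. dhd Q a = i}"
  have "pmul Q (rho Q lam i) p = pmul Q (\<Sum>a\<in>?A. psc ((-1) ^ deg a) (pmul Q (arrow Q a) (arrow Q (bar a)))) p
      + pmul Q (psc (- lam i) (idem i)) p"
    unfolding rho_def by (rule pmul_add_left) (simp_all add: fs_simps PA_fs[OF p])
  also have "pmul Q (\<Sum>a\<in>?A. psc ((-1) ^ deg a) (pmul Q (arrow Q a) (arrow Q (bar a)))) p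
     = (\<Sum>a\<in>?A. psc ((-1) ^ deg a) (pmul Q (arrow Q a) (pmul Q (arrow Q (bar a)) p)))"
    by (simp add: pmul_sum_psc_left pmul_assoc fs_simps PA_fs[OF p])
  also have "pmul Q (psc (- lam i) (idem i)) p = psc (- lam i) (pmul Q (idem i) p)"
    by (rule pmul_psc_left) (simp_all add: fs_idem PA_fs[OF p])
  finally show ?thesis .
qed

end

section \<open>Modules over A\<close>

text \<open>From here on, sums of elements of the path algebra are kept as sums of functions rather
  than evaluated pointwise.\<close>
declare plus_fun_apply[simp del] zero_fun_apply[simp del]

locale A_mod = finite_quiver Q for Q :: "('v,'e) quiver" +
  fixes Q0' :: "'v set" and lam :: "'v \<Rightarrow> 'r::comm_ring_1"
    and act :: "('v,'e,'r) pel \<Rightarrow> 'm::ab_group_add \<Rightarrow> 'm"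
  assumes Q0'_sub: "Q0' \<subseteq> verts Q" and amod: "A_module Q Q0' lam act"
begin

abbreviation "rs \<equiv> rscal Q act"
abbreviation "I \<equiv> the_ideal Q Q0' lam"

lemma act_add: "x \<in> PA Q \<Longrightarrow> y \<in> PA Q \<Longrightarrow> act (x + y) v = act x v + act y v"
  using amod by (simp add: A_module_def pa_module_def padd_eq)
lemma act_v: "x \<in> PA Q \<Longrightarrow> act x (v + w) = act x v + act x w"
  using amod by (simp add: A_module_def pa_module_def)
lemma act_mul: "x \<in> PA Q \<Longrightarrow> y \<in> PA Q \<Longrightarrow> act (pmul Q x y) v = act x (act y v)"
  using amod by (simp add: A_module_def pa_module_def)
lemma act_one: "act (one Q) v = v"
  using amod by (simp add: A_module_def pa_module_def)
lemma act_ideal: "z \<in> I \<Longrightarrow> act z v = 0"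
  using amod by (simp add: A_module_def)

lemma act_v0: "x \<in> PA Q \<Longrightarrow> act x 0 = 0"
  using act_v[of x 0 0] by simp
lemma act_vneg: "x \<in> PA Q \<Longrightarrow> act x (- v) = - act x v"
  by (metis act_v act_v0 add.right_inverse minus_unique)
lemma act_vdiff: "x \<in> PA Q \<Longrightarrow> act x (v - w) = act x v - act x w"
  using act_v[of x v "- w"] act_vneg[of x w] by simp
lemma act_vsum: "x \<in> PA Q \<Longrightarrow> act x (\<Sum>k\<in>K. f k) = (\<Sum>k\<in>K. act x (f k))"
  by (induction K rule: infinite_finite_induct) (simp_all add: act_v0 act_v)
lemma act_zero: "act 0 v = 0"
  using act_add[OF PA_zero PA_zero, of v] by simp
lemma act_sum: "(\<And>k. k \<in> K \<Longrightarrow> f k \<in> PA Q) \<Longrightarrow> act (\<Sum>k\<in>K. f k) v = (\<Sum>k\<in>K. act (f k) v)"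
proof (induction K rule: infinite_finite_induct)
  case (insert a F)
  have "act (f a + sum f F) v = act (f a) v + act (sum f F) v"
    by (rule act_add) (use insert in \<open>auto intro!: PA_sum\<close>)
  then show ?case using insert by simp
qed (simp_all add: act_zero)

lemma PA_psc_one: "psc r (one Q) \<in> PA Q" by (simp add: PA_psc PA_one)

lemma act_psc: "x \<in> PA Q \<Longrightarrow> act (psc r x) v = rs r (act x v)"
  by (simp add: psc_pmul_one act_mul PA_psc_one rscal_def)
lemma act_rs: "x \<in> PA Q \<Longrightarrow> act x (rs r v) = rs r (act x v)"
  by (metis act_mul act_psc PA_psc_one psc_pmul_one_right rscal_def)

lemma rs_v: "rs r (v + w) = rs r v + rs r w" by (simp add: rscal_def act_v PA_psc_one)
lemma rs_v0: "rs r 0 = 0" by (simp add: rscal_def act_v0 PA_psc_one)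
lemma rs_vdiff: "rs r (v - w) = rs r v - rs r w" by (simp add: rscal_def act_vdiff PA_psc_one)
lemma rs_vsum: "rs r (\<Sum>k\<in>K. f k) = (\<Sum>k\<in>K. rs r (f k))" by (simp add: rscal_def act_vsum PA_psc_one)
lemma rs_add: "rs (r + s) v = rs r v + rs s v"
proof -
  have "psc (r + s) (one Q) = psc r (one Q) + psc s (one Q)"
    by (rule ext) (simp add: psc_def distrib_right plus_fun_apply)
  then show ?thesis by (simp add: rscal_def act_add PA_psc_one)
qed
lemma rs_mult: "rs (r * s) v = rs r (rs s v)"
proof -
  have "psc (r * s) (one Q) = psc r (psc s (one Q))" by (rule ext) (simp add: psc_def mult.assoc)
  also have "\<dots> = pmul Q (psc r (one Q)) (psc s (one Q))" by (rule psc_pmul_one[OF PA_psc_one])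
  finally show ?thesis by (simp add: rscal_def act_mul PA_psc_one)
qed
lemma rs_zero: "rs 0 v = 0"
proof -
  have e: "psc 0 (one Q) = 0" by (rule ext) (simp add: psc_def zero_fun_apply)
  show ?thesis unfolding rscal_def e by (rule act_zero)
qed
lemma rs_one: "rs 1 v = v"
proof -
  have e: "psc 1 (one Q) = one Q" by (rule ext) (simp add: psc_def)
  show ?thesis unfolding rscal_def e by (rule act_one)
qed
lemma rs_neg: "rs (- r) v = - rs r v"
  using rs_add[of r "- r" v] by (simp add: rs_zero eq_neg_iff_add_eq_0 add.commute)
lemma rs_rs_comm: "rs r (rs s v) = rs s (rs r v)"
  by (metis mult.commute rs_mult)

lemma ideal_PA: "z \<in> I \<Longrightarrow> z \<in> PA Q"
proof (induction rule: ideal_gen.induct)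
  case gen
  show ?case unfolding rel_eq by (rule PA_sum) (use Q0'_sub rho_PA in auto)
next
  case zero then show ?case using PA_zero by (simp add: zero_fun_def)
qed (simp_all add: padd_eq PA_add PA_pmul)

lemma eI_iff: "x \<in> eI Q Q0' lam i \<longleftrightarrow> x \<in> I \<and> x \<in> eRQ Q i"
  by (auto simp: eI_def eRQ_def)

text \<open>Each local relation rho_i, i in Q0', lies in the ideal (it is e_i times the generator).\<close>
lemma rho_ideal: "i \<in> Q0' \<Longrightarrow> rho Q lam i \<in> I"
proof -
  assume i: "i \<in> Q0'"
  then have iv: "i \<in> verts Q" using Q0'_sub by auto
  have "pmul Q (idem i) (rel Q Q0' lam) \<in> I"
    by (rule ideal_gen.lmul[OF PA_idem[OF iv] ideal_gen.gen])
  then show ?thesis using idem_rel[OF iv Q0'_sub, where lam=lam] i by simp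
qed

text \<open>V_i = e_i V is the fixed space of e_i, as e_i is idempotent.\<close>
lemma Vsub_iff: "i \<in> verts Q \<Longrightarrow> w \<in> Vsub act i \<longleftrightarrow> act (idem i) w = w"
proof
  assume i: "i \<in> verts Q" and "w \<in> Vsub act i"
  then obtain u where u: "w = act (idem i) u" by (auto simp: Vsub_def)
  have "act (idem i) w = act (pmul Q (idem i) (idem i)) u" using u by (simp add: act_mul PA_idem i)
  then show "act (idem i) w = w" using u by (simp add: pmul_idem_idem)
next
  assume "act (idem i) w = w" then show "w \<in> Vsub act i" unfolding Vsub_def by (metis rangeI)
qed

lemma act_in_V: "i \<in> verts Q \<Longrightarrow> x \<in> eRQ Q i \<Longrightarrow> act x w \<in> Vsub act i"
  by (simp add: Vsub_iff act_mul[symmetric] PA_idem eRQ_PA eRQ_idem_mul)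

lemma V_add: "i \<in> verts Q \<Longrightarrow> v \<in> Vsub act i \<Longrightarrow> w \<in> Vsub act i \<Longrightarrow> v + w \<in> Vsub act i"
  by (simp add: Vsub_iff act_v PA_idem)
lemma V_zero: "i \<in> verts Q \<Longrightarrow> 0 \<in> Vsub act i"
  by (simp add: Vsub_iff act_v0 PA_idem)
lemma V_diff: "i \<in> verts Q \<Longrightarrow> v \<in> Vsub act i \<Longrightarrow> w \<in> Vsub act i \<Longrightarrow> v - w \<in> Vsub act i"
  by (simp add: Vsub_iff act_vdiff PA_idem)
lemma V_rs: "i \<in> verts Q \<Longrightarrow> v \<in> Vsub act i \<Longrightarrow> rs r v \<in> Vsub act i"
  by (simp add: Vsub_iff act_rs PA_idem)
lemma V_sum: "i \<in> verts Q \<Longrightarrow> (\<And>k. k \<in> K \<Longrightarrow> f k \<in> Vsub act i) \<Longrightarrow> (\<Sum>k\<in>K. f k) \<in> Vsub act i"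
  by (induction K rule: infinite_finite_induct) (simp_all add: V_zero V_add)

lemma lin_sum:
  assumes E0: "0 \<in> E" and Eadd: "\<And>x y. x \<in> E \<Longrightarrow> y \<in> E \<Longrightarrow> x + y \<in> E"
    and Epsc: "\<And>r x. x \<in> E \<Longrightarrow> psc r x \<in> E"
    and fadd: "\<And>x y. x \<in> E \<Longrightarrow> y \<in> E \<Longrightarrow> f (x + y) = f x + f y"
    and fpsc: "\<And>r x. x \<in> E \<Longrightarrow> f (psc r x) = rs r (f x)"
    and b: "\<And>k. k \<in> K \<Longrightarrow> b k \<in> E"
  shows "(\<Sum>k\<in>K. psc (c k) (b k)) \<in> E \<and> f (\<Sum>k\<in>K. psc (c k) (b k)) = (\<Sum>k\<in>K. rs (c k) (f (b k)))"
proof -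
  have f0: "f 0 = 0" using fadd[OF E0 E0] by simp
  show ?thesis
    using b
  proof (induction K rule: infinite_finite_induct)
    case (insert a F)
    have IH: "(\<Sum>k\<in>F. psc (c k) (b k)) \<in> E" "f (\<Sum>k\<in>F. psc (c k) (b k)) = (\<Sum>k\<in>F. rs (c k) (f (b k)))"
      using insert by auto
    have ba: "psc (c a) (b a) \<in> E" using insert Epsc by auto
    have "(\<Sum>k\<in>insert a F. psc (c k) (b k)) = psc (c a) (b a) + (\<Sum>k\<in>F. psc (c k) (b k))"
      by (simp only: sum.insert[OF insert(1,2)])
    moreover have "psc (c a) (b a) + (\<Sum>k\<in>F. psc (c k) (b k)) \<in> E" using Eadd[OF ba IH(1)] .
    moreover have "f (psc (c a) (b a) + (\<Sum>k\<in>F. psc (c k) (b k))) = (\<Sum>k\<in>insert a F. rs (c k) (f (b k)))"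
      using fadd[OF ba IH(1)] IH(2) fpsc[of "b a" "c a"] insert by simp
    ultimately show ?case by simp
  qed (simp_all add: E0 f0)
qed

lemma act_expand: "x \<in> PA Q \<Longrightarrow> act x v = (\<Sum>q\<in>supp x. rs (x q) (act (basis q) v))"
proof -
  assume x: "x \<in> PA Q"
  have b: "basis q \<in> PA Q" if "q \<in> supp x" for q using x that by (meson PA_iff PA_basis)
  have "act x v = act (\<Sum>q\<in>supp x. psc (x q) (basis q)) v" using expand[OF PA_fs[OF x]] by simp
  also have "\<dots> = (\<Sum>q\<in>supp x. rs (x q) (act (basis q) v))"
    by (rule conjunct2[OF lin_sum[of "PA Q" "\<lambda>x. act x v" "supp x" basis x]])
      (simp_all add: PA_zero PA_add PA_psc act_add act_psc b)
  finally show ?thesis .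
qed

text \<open>The defining properties of a component of the modules Hom_R(e_i A, V_j), without the
  normalisation outside e_i RQbar: R-linear maps e_i RQbar -> V_j killing the ideal.\<close>
definition lin_hom :: "'v \<Rightarrow> 'v \<Rightarrow> (('v,'e,'r) pel \<Rightarrow> 'm) \<Rightarrow> bool" where
  "lin_hom i j f \<longleftrightarrow> (\<forall>x\<in>eRQ Q i. f x \<in> Vsub act j)
     \<and> (\<forall>x\<in>eRQ Q i. \<forall>y\<in>eRQ Q i. f (x + y) = f x + f y)
     \<and> (\<forall>r. \<forall>x\<in>eRQ Q i. f (psc r x) = rs r (f x))
     \<and> (\<forall>x\<in>eRQ Q i. x \<in> I \<longrightarrow> f x = 0)"

lemma lin_homI:
  assumes "\<And>x. x \<in> eRQ Q i \<Longrightarrow> f x \<in> Vsub act j"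
    and "\<And>x y. x \<in> eRQ Q i \<Longrightarrow> y \<in> eRQ Q i \<Longrightarrow> f (x + y) = f x + f y"
    and "\<And>r x. x \<in> eRQ Q i \<Longrightarrow> f (psc r x) = rs r (f x)"
    and "\<And>x. x \<in> eRQ Q i \<Longrightarrow> x \<in> I \<Longrightarrow> f x = 0"
  shows "lin_hom i j f"
  using assms by (simp add: lin_hom_def)

lemma hom_V: "lin_hom i j f \<Longrightarrow> x \<in> eRQ Q i \<Longrightarrow> f x \<in> Vsub act j"
  by (simp add: lin_hom_def)
lemma hom_add: "lin_hom i j f \<Longrightarrow> x \<in> eRQ Q i \<Longrightarrow> y \<in> eRQ Q i \<Longrightarrow> f (x + y) = f x + f y"
  by (simp add: lin_hom_def)
lemma hom_psc: "lin_hom i j f \<Longrightarrow> x \<in> eRQ Q i \<Longrightarrow> f (psc r x) = rs r (f x)"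
  by (simp add: lin_hom_def)
lemma hom_I: "lin_hom i j f \<Longrightarrow> x \<in> I \<Longrightarrow> x \<in> eRQ Q i \<Longrightarrow> f x = 0"
  by (simp add: lin_hom_def)

lemma hom_expand: "lin_hom i j f \<Longrightarrow> x \<in> eRQ Q i \<Longrightarrow> f x = (\<Sum>q\<in>supp x. rs (x q) (f (basis q)))"
proof -
  assume f: "lin_hom i j f" and x: "x \<in> eRQ Q i"
  have b: "basis q \<in> eRQ Q i" if "q \<in> supp x" for q
    using eRQ_supp[OF x that] eRQ_basis by metis
  have "f x = f (\<Sum>q\<in>supp x. psc (x q) (basis q))" using expand[OF PA_fs[OF eRQ_PA[OF x]]] by simp
  also have "\<dots> = (\<Sum>q\<in>supp x. rs (x q) (f (basis q)))"
    by (rule conjunct2[OF lin_sum[of "eRQ Q i" f "supp x" basis x]])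
      (simp_all add: eRQ_zero eRQ_add eRQ_psc hom_add[OF f] hom_psc[OF f] b)
  finally show ?thesis .
qed

lemma HomA_iff: "\<kappa> \<in> HomA Q Q0' lam act i j \<longleftrightarrow> lin_hom i j \<kappa> \<and> (\<forall>x. x \<notin> eRQ Q i \<longrightarrow> \<kappa> x = 0)"
  by (auto simp: HomA_def lin_hom_def padd_eq eI_iff)

lemma HomA_ext: "lin_hom i j f \<Longrightarrow> ext_on (eRQ Q i) f \<in> HomA Q Q0' lam act i j"
  by (auto simp: HomA_iff lin_hom_def ext_on_def eRQ_add eRQ_psc)

lemma hom_out: "\<kappa> \<in> HomA Q Q0' lam act i j \<Longrightarrow> x \<notin> eRQ Q i \<Longrightarrow> \<kappa> x = 0"
  by (simp add: HomA_iff)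

lemma lin_hom_zero: "j \<in> verts Q \<Longrightarrow> lin_hom i j (\<lambda>_. 0)"
  by (simp add: lin_hom_def V_zero rs_v0)

lemma lin_hom_plus:
  "j \<in> verts Q \<Longrightarrow> lin_hom i j f \<Longrightarrow> lin_hom i j g \<Longrightarrow> lin_hom i j (\<lambda>x. f x + g x)"
  by (simp add: lin_hom_def V_add rs_v)

lemma lin_hom_diff:
  "j \<in> verts Q \<Longrightarrow> lin_hom i j f \<Longrightarrow> lin_hom i j g \<Longrightarrow> lin_hom i j (\<lambda>x. f x - g x)"
  by (simp add: lin_hom_def V_diff rs_vdiff)

lemma lin_hom_scale: "j \<in> verts Q \<Longrightarrow> lin_hom i j f \<Longrightarrow> lin_hom i j (\<lambda>x. rs r (f x))"
  by (simp add: lin_hom_def V_rs rs_v rs_rs_comm rs_v0)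

lemma lin_hom_sum:
  "j \<in> verts Q \<Longrightarrow> (\<And>k. k \<in> K \<Longrightarrow> lin_hom i j (f k)) \<Longrightarrow> lin_hom i j (\<lambda>x. \<Sum>k\<in>K. f k x)"
  by (induction K rule: infinite_finite_induct) (simp_all add: lin_hom_zero lin_hom_plus)

lemma lin_hom_eval: "i \<in> verts Q \<Longrightarrow> lin_hom i i (\<lambda>p. act p v)"
  by (rule lin_homI) (simp_all add: act_in_V act_add eRQ_PA act_psc act_ideal)

lemma lin_hom_precomp:
  assumes a: "a \<in> darrs Q" and f: "lin_hom (dhd Q a) j f"
  shows "lin_hom (dtl Q a) j (\<lambda>p. f (pmul Q (arrow Q a) p))"
proof (rule lin_homI)
  fix x :: "('v,'e,'r) pel" assume x: "x \<in> eRQ Q (dtl Q a)"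
  have ax: "pmul Q (arrow Q a) x \<in> eRQ Q (dhd Q a)" by (rule eRQ_arrow_mul[OF a eRQ_PA[OF x]])
  show "f (pmul Q (arrow Q a) x) \<in> Vsub act j" by (rule hom_V[OF f ax])
  show "f (pmul Q (arrow Q a) (psc r x)) = rs r (f (pmul Q (arrow Q a) x))" for r
    using pmul_psc_right[OF fs_arrow PA_fs[OF eRQ_PA[OF x]]] hom_psc[OF f ax] by simp
  show "f (pmul Q (arrow Q a) x) = 0" if "x \<in> I"
    by (rule hom_I[OF f ideal_gen.lmul[OF PA_arrow[OF a] that] ax])
  fix y :: "('v,'e,'r) pel" assume y: "y \<in> eRQ Q (dtl Q a)"
  have ay: "pmul Q (arrow Q a) y \<in> eRQ Q (dhd Q a)" by (rule eRQ_arrow_mul[OF a eRQ_PA[OF y]])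
  show "f (pmul Q (arrow Q a) (x + y)) = f (pmul Q (arrow Q a) x) + f (pmul Q (arrow Q a) y)"
    using pmul_add_right[OF PA_fs[OF eRQ_PA[OF x]] PA_fs[OF eRQ_PA[OF y]] fs_arrow] hom_add[OF f ax ay]
    by simp
qed

lemma lin_hom_postcomp:
  assumes a: "a \<in> darrs Q" and f: "lin_hom i (dtl Q a) f"
  shows "lin_hom i (dhd Q a) (\<lambda>p. act (arrow Q a) (f p))"
proof (rule lin_homI)
  have aPA: "arrow Q a \<in> PA Q" by (rule PA_arrow[OF a])
  fix x :: "('v,'e,'r) pel" assume x: "x \<in> eRQ Q i"
  show "act (arrow Q a) (f x) \<in> Vsub act (dhd Q a)"
    using act_in_V[OF _ eRQ_arrow[OF a]] darrs_ends[OF a] by blast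
  show "act (arrow Q a) (f (psc r x)) = rs r (act (arrow Q a) (f x))" for r
    by (simp only: hom_psc[OF f x] act_rs[OF aPA])
  show "act (arrow Q a) (f x) = 0" if "x \<in> I"
    by (simp only: hom_I[OF f that x] act_v0[OF aPA])
  fix y :: "('v,'e,'r) pel" assume y: "y \<in> eRQ Q i"
  show "act (arrow Q a) (f (x + y)) = act (arrow Q a) (f x) + act (arrow Q a) (f y)"
    by (simp only: hom_add[OF f x y] act_v[OF aPA])
qed

end

section \<open>The maps epsilon, g and m\<close>

lemma ext_on_in: "x \<in> S \<Longrightarrow> ext_on S f x = f x" by (simp add: ext_on_def)

context A_mod
begin

abbreviation "S0 \<equiv> DSum Q Q0' lam act (verts Q) id id"
abbreviation "S1 \<equiv> DSum Q Q0' lam act (darrs Q) (dtl Q) (dhd Q)"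
abbreviation "S2 \<equiv> DSum Q Q0' lam act Q0' id id"

lemma S0_lin: "\<kappa> \<in> S0 \<Longrightarrow> i \<in> verts Q \<Longrightarrow> lin_hom i i (\<kappa> i)"
  by (simp add: DSum_def HomA_iff)
lemma S0_D: "\<kappa> \<in> S0 \<Longrightarrow> i \<in> verts Q \<Longrightarrow> \<kappa> i \<in> HomA Q Q0' lam act i i"
  by (simp add: DSum_def)
lemma S0_out: "\<kappa> \<in> S0 \<Longrightarrow> i \<notin> verts Q \<Longrightarrow> \<kappa> i = (\<lambda>_. 0)"
  by (simp add: DSum_def)
lemma S1_lin: "\<gamma> \<in> S1 \<Longrightarrow> a \<in> darrs Q \<Longrightarrow> lin_hom (dtl Q a) (dhd Q a) (\<gamma> a)"
  by (simp add: DSum_def HomA_iff)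
lemma S1_D: "\<gamma> \<in> S1 \<Longrightarrow> a \<in> darrs Q \<Longrightarrow> \<gamma> a \<in> HomA Q Q0' lam act (dtl Q a) (dhd Q a)"
  by (simp add: DSum_def)
lemma S1_out: "\<gamma> \<in> S1 \<Longrightarrow> a \<notin> darrs Q \<Longrightarrow> \<gamma> a = (\<lambda>_. 0)"
  by (simp add: DSum_def)

lemma eps_wd: "epsmap Q act v \<in> S0"
  by (simp add: DSum_def epsmap_def HomA_ext lin_hom_eval)

lemma g_wd: "\<kappa> \<in> S0 \<Longrightarrow> gmap Q act \<kappa> \<in> S1"
proof -
  assume k: "\<kappa> \<in> S0"
  have "lin_hom (dtl Q a) (dhd Q a)
      (\<lambda>p. \<kappa> (dhd Q a) (pmul Q (arrow Q a) p) - act (arrow Q a) (\<kappa> (dtl Q a) p))"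
    if a: "a \<in> darrs Q" for a
    using darrs_ends[OF a]
    by (intro lin_hom_diff lin_hom_precomp lin_hom_postcomp a S0_lin[OF k]) auto
  then show ?thesis by (simp add: DSum_def gmap_def HomA_ext)
qed

lemma m_summand_lin:
  assumes g: "\<gamma> \<in> S1" and a: "a \<in> darrs Q" "dtl Q a = i"
  shows "lin_hom i i (\<lambda>p. rs ((-1) ^ deg a)
           (act (arrow Q (bar a)) (\<gamma> a p) + \<gamma> (bar a) (pmul Q (arrow Q a) p)))"
proof -
  have iv: "i \<in> verts Q" using darrs_ends[OF a(1)] a(2) by auto
  have "lin_hom (dtl Q a) (dhd Q (bar a)) (\<lambda>p. act (arrow Q (bar a)) (\<gamma> a p))"
    using S1_lin[OF g a(1)] a(1) by (intro lin_hom_postcomp) simp_all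
  moreover have "lin_hom (dtl Q a) (dhd Q (bar a)) (\<lambda>p. \<gamma> (bar a) (pmul Q (arrow Q a) p))"
    using S1_lin[OF g, of "bar a"] a(1) by (intro lin_hom_precomp) simp_all
  ultimately show ?thesis
    using a(2) iv by (intro lin_hom_scale lin_hom_plus) simp_all
qed

lemma m_wd: "\<gamma> \<in> S1 \<Longrightarrow> mmap Q Q0' act \<gamma> \<in> S2"
proof -
  assume g: "\<gamma> \<in> S1"
  have "lin_hom i i (\<lambda>p. \<Sum>a\<in>{a\<in>darrs Q. dtl Q a = i}.
         rs ((-1) ^ deg a) (act (arrow Q (bar a)) (\<gamma> a p) + \<gamma> (bar a) (pmul Q (arrow Q a) p)))"
    if i: "i \<in> Q0'" for i
    using i Q0'_sub by (intro lin_hom_sum m_summand_lin[OF g]) auto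
  then show ?thesis using Q0'_sub by (simp add: DSum_def mmap_def HomA_ext)
qed

text \<open>These are pointwise identities; A-linearity of g and m rests on associativity of the product.\<close>

lemma eps_add: "epsmap Q act (v + w) = dplus (epsmap Q act v) (epsmap Q act w)"
  by (intro ext) (simp add: epsmap_def dplus_def ext_on_def act_v eRQ_PA)

lemma eps_A_linear: "x \<in> PA Q \<Longrightarrow> epsmap Q act (act x v) = hact Q id x (epsmap Q act v)"
  by (intro ext) (auto simp: epsmap_def hact_def ext_on_def act_mul eRQ_PA eRQ_pmul)

lemma g_add: "gmap Q act (dplus \<kappa> \<kappa>') = dplus (gmap Q act \<kappa>) (gmap Q act \<kappa>')"
  by (intro ext) (simp add: gmap_def dplus_def ext_on_def act_v PA_arrow algebra_simps)

lemma g_A_linear: "x \<in> PA Q \<Longrightarrow> gmap Q act (hact Q id x \<kappa>) = hact Q (dtl Q) x (gmap Q act \<kappa>)"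
  by (intro ext)
    (auto simp: gmap_def hact_def ext_on_def eRQ_arrow_mul eRQ_PA eRQ_pmul pmul_assoc_PA PA_arrow)

lemma m_add: "mmap Q Q0' act (dplus \<gamma> \<gamma>') = dplus (mmap Q Q0' act \<gamma>) (mmap Q Q0' act \<gamma>')"
  by (intro ext)
    (simp add: mmap_def dplus_def ext_on_def act_v PA_arrow rs_v sum.distrib[symmetric] add_ac)

lemma m_A_linear:
  "x \<in> PA Q \<Longrightarrow> mmap Q Q0' act (hact Q (dtl Q) x \<gamma>) = hact Q id x (mmap Q Q0' act \<gamma>)"
  by (intro ext)
    (auto simp: mmap_def hact_def ext_on_def eRQ_arrow_mul eRQ_PA eRQ_pmul pmul_assoc_PA PA_arrow
      intro!: sum.cong)

end

section \<open>Exactness at V and at the first Hom term\<close>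

context A_mod
begin

text \<open>epsilon is injective: v is recovered as the sum of the e_i v, since 1 = sum_i e_i.\<close>
lemma eps_inj: "inj (epsmap Q act)"
proof (rule injI)
  fix v w assume e: "epsmap Q act v = epsmap Q act w"
  have decomp: "u = (\<Sum>i\<in>verts Q. act (idem i) u)" for u
    using act_one[of u] act_sum[of "verts Q" idem u] by (simp add: one_eq PA_idem)
  have "act (idem i) v = act (idem i) w" if i: "i \<in> verts Q" for i
    using fun_cong[OF fun_cong[OF e, of i], of "idem i"] i
    by (simp add: epsmap_def ext_on_in[OF eRQ_idem[OF i]])
  then show "v = w" using decomp[of v] decomp[of w] by simp
qed

text \<open>g o epsilon = 0, by associativity of the action.\<close>
lemma g_eps_zero: "gmap Q act (epsmap Q act v) = dzero"
  by (intro ext)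
    (auto simp: gmap_def epsmap_def ext_on_def dzero_def act_mul PA_arrow eRQ_PA eRQ_arrow_mul
      dest: darrs_ends)

text \<open>A kernel element of g is determined along paths by its values at the idempotents:
  kappa_{hp}(p) = p v with v = sum_j kappa_j(e_j), by induction on the length of p.\<close>
lemma ker_g_path:
  assumes k: "\<kappa> \<in> S0" and g: "gmap Q act \<kappa> = dzero"
    and v: "v = (\<Sum>j\<in>verts Q. \<kappa> j (idem j))"
  shows "valid_path Q (j, l) \<Longrightarrow> \<kappa> (phead Q (j, l)) (basis (j, l)) = act (basis (j, l)) v"
proof (induction l)
  case Nil
  then have j: "j \<in> verts Q" by (simp add: valid_Nil)
  have "act (idem j) (\<kappa> k (idem k)) = (if k = j then \<kappa> j (idem j) else 0)" if kv: "k \<in> verts Q" for k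
  proof -
    have fixed: "\<kappa> k (idem k) = act (idem k) (\<kappa> k (idem k))"
      using hom_V[OF S0_lin[OF k kv] eRQ_idem[OF kv]] Vsub_iff[OF kv] by simp
    then have "act (idem j) (\<kappa> k (idem k)) = act (pmul Q (idem j) (idem k)) (\<kappa> k (idem k))"
      by (metis act_mul PA_idem j kv)
    then show ?thesis using fixed by (auto simp: pmul_idem_idem act_zero)
  qed
  then have "act (idem j) v = \<kappa> j (idem j)"
    using j fin_verts by (simp add: v act_vsum[OF PA_idem[OF j]] sum.delta cong: sum.cong)
  then show ?case by (simp add: phead_def idem_def)
next
  case (Cons a l)
  have a: "a \<in> darrs Q" and vl: "valid_path Q (j, l)" and t: "dtl Q a = phead Q (j, l)"
    using Cons(2) by (auto simp: valid_Cons)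
  have b: "(basis (j, l) :: ('v,'e,'r) pel) \<in> eRQ Q (dtl Q a)" using eRQ_basis[OF vl] t by simp
  have "gmap Q act \<kappa> a (basis (j, l)) = 0" using g by (simp add: dzero_def)
  then have "\<kappa> (dhd Q a) (pmul Q (arrow Q a) (basis (j, l))) = act (arrow Q a) (\<kappa> (dtl Q a) (basis (j, l)))"
    using a b by (simp add: gmap_def ext_on_in)
  also have "\<dots> = act (pmul Q (arrow Q a) (basis (j, l))) v"
    using Cons(1)[OF vl] t act_mul[OF PA_arrow[OF a] eRQ_PA[OF b]] by simp
  finally show ?case by (simp add: arrow_basis[OF t] phead_def)
qed

lemma ker_g_eps:
  assumes k: "\<kappa> \<in> S0" and g: "gmap Q act \<kappa> = dzero"
  shows "\<kappa> = epsmap Q act (\<Sum>j\<in>verts Q. \<kappa> j (idem j))"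
proof (intro ext)
  fix i p
  define v where "v = (\<Sum>j\<in>verts Q. \<kappa> j (idem j))"
  have "\<kappa> i p = act p v" if i: "i \<in> verts Q" and p: "p \<in> eRQ Q i"
  proof -
    have "\<kappa> i p = (\<Sum>q\<in>supp p. rs (p q) (\<kappa> i (basis q)))" by (rule hom_expand[OF S0_lin[OF k i] p])
    also have "\<dots> = (\<Sum>q\<in>supp p. rs (p q) (act (basis q) v))"
      using eRQ_supp[OF p] ker_g_path[OF k g v_def] by (intro sum.cong refl) (metis prod.collapse)
    also have "\<dots> = act p v" by (rule act_expand[symmetric, OF eRQ_PA[OF p]])
    finally show ?thesis .
  qed
  then show "\<kappa> i p = epsmap Q act v i p"
    using S0_out[OF k] hom_out[OF S0_D[OF k]] by (auto simp: epsmap_def ext_on_def)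
qed

lemma exact_at_S0: "range (epsmap Q act) = {\<kappa>\<in>S0. gmap Q act \<kappa> = dzero}"
  using eps_wd g_eps_zero ker_g_eps by blast

section \<open>The composite m o g vanishes\<close>

text \<open>m(gamma)_i rewritten as a sum over the arrows ending at i (reindex by a -> abar).\<close>
lemma mmap_heads:
  assumes "i \<in> Q0'" "p \<in> eRQ Q i"
  shows "mmap Q Q0' act \<gamma> i p = - (\<Sum>a\<in>{a\<in>darrs Q. dhd Q a = i}.
     rs ((-1) ^ deg a) (act (arrow Q a) (\<gamma> (bar a) p) + \<gamma> a (pmul Q (arrow Q (bar a)) p)))"
  using assms by (simp add: mmap_def ext_on_in sum_bar sign_bar rs_neg sum_negf)

lemma rho_lin:
  assumes i: "i \<in> Q0'"
    and fadd: "\<And>x y. x \<in> eRQ Q i \<Longrightarrow> y \<in> eRQ Q i \<Longrightarrow> f (x + y) = f x + f y"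
    and fpsc: "\<And>r x. x \<in> eRQ Q i \<Longrightarrow> f (psc r x) = rs r (f x)"
    and p: "p \<in> PA Q"
    and z: "f (pmul Q (rho Q lam i) p) = 0"
  shows "(\<Sum>a\<in>{a\<in>darrs Q. dhd Q a = i}. rs ((-1) ^ deg a) (f (pmul Q (arrow Q a) (pmul Q (arrow Q (bar a)) p))))
     = - rs (- lam i) (f (pmul Q (idem i) p))"
proof -
  let ?A = "{a\<in>darrs Q. dhd Q a = i}"
  have iv: "i \<in> verts Q" using i Q0'_sub by auto
  have bE: "pmul Q (arrow Q a) (pmul Q (arrow Q (bar a)) p) \<in> eRQ Q i" if "a \<in> ?A" for a
    using that eRQ_arrow_mul[of a "pmul Q (arrow Q (bar a)) p"] PA_pmul[OF PA_arrow[of "bar a"] p] by auto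
  have L: "(\<Sum>a\<in>?A. psc ((-1) ^ deg a) (pmul Q (arrow Q a) (pmul Q (arrow Q (bar a)) p))) \<in> eRQ Q i \<and>
     f (\<Sum>a\<in>?A. psc ((-1) ^ deg a) (pmul Q (arrow Q a) (pmul Q (arrow Q (bar a)) p))) =
     (\<Sum>a\<in>?A. rs ((-1) ^ deg a) (f (pmul Q (arrow Q a) (pmul Q (arrow Q (bar a)) p))))"
    by (rule lin_sum) (use bE fadd fpsc in \<open>simp_all add: eRQ_zero eRQ_add eRQ_psc\<close>)
  have ip: "pmul Q (idem i) p \<in> eRQ Q i" by (rule eRQ_pmul[OF eRQ_idem[OF iv] p])
  have "0 = f (pmul Q (rho Q lam i) p)" using z by simp
  also have "\<dots> = (\<Sum>a\<in>?A. rs ((-1) ^ deg a) (f (pmul Q (arrow Q a) (pmul Q (arrow Q (bar a)) p))))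
      + rs (- lam i) (f (pmul Q (idem i) p))"
    unfolding rho_pmul[OF iv p] fadd[OF conjunct1[OF L] eRQ_psc[OF ip]] fpsc[OF ip] conjunct2[OF L] ..
  finally show ?thesis by (simp add: eq_neg_iff_add_eq_0)
qed

lemma rho_act:
  assumes i: "i \<in> Q0'" and w: "w \<in> Vsub act i"
  shows "(\<Sum>a\<in>{a\<in>darrs Q. dhd Q a = i}. rs ((-1) ^ deg a) (act (arrow Q a) (act (arrow Q (bar a)) w)))
     = - rs (- lam i) w"
proof -
  have iv: "i \<in> verts Q" using i Q0'_sub by auto
  have wi: "act (idem i) w = w" using w Vsub_iff[OF iv] by blast
  have "(\<Sum>a\<in>{a\<in>darrs Q. dhd Q a = i}. rs ((-1) ^ deg a) (act (pmul Q (arrow Q a) (pmul Q (arrow Q (bar a)) (idem i))) w))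
     = - rs (- lam i) (act (pmul Q (idem i) (idem i)) w)"
  proof (rule rho_lin[OF i, where f="\<lambda>x. act x w"])
    show "act (pmul Q (rho Q lam i) (idem i)) w = 0"
      using act_mul[OF rho_PA[OF iv] PA_idem[OF iv]] act_ideal[OF rho_ideal[OF i]] by simp
  qed (simp_all add: act_add eRQ_PA act_psc PA_idem iv)
  moreover have "act (pmul Q (arrow Q a) (pmul Q (arrow Q (bar a)) (idem i))) w = act (arrow Q a) (act (arrow Q (bar a)) w)"
    if "a \<in> {a\<in>darrs Q. dhd Q a = i}" for a
    using that wi by (simp add: act_mul PA_arrow PA_idem iv PA_pmul)
  ultimately show ?thesis using wi by (simp add: pmul_idem_idem)
qed

text \<open>Likewise every component of Hom_R(e_i A, V_i) satisfies the relation rho_i, since it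
  kills rho_i p.\<close>
lemma hom_rho:
  assumes i: "i \<in> Q0'" and f: "lin_hom i i f" and p: "p \<in> eRQ Q i"
  shows "(\<Sum>a\<in>{a\<in>darrs Q. dhd Q a = i}. rs ((-1) ^ deg a) (f (pmul Q (arrow Q a) (pmul Q (arrow Q (bar a)) p))))
     = - rs (- lam i) (f p)"
proof -
  have iv: "i \<in> verts Q" using i Q0'_sub by auto
  have "pmul Q (rho Q lam i) p \<in> I" by (rule ideal_gen.rmul[OF eRQ_PA[OF p] rho_ideal[OF i]])
  moreover have "pmul Q (rho Q lam i) p \<in> eRQ Q i" by (rule eRQ_pmul[OF rho_eRQ[OF iv] eRQ_PA[OF p]])
  ultimately have "f (pmul Q (rho Q lam i) p) = 0" by (rule hom_I[OF f])
  then show ?thesis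
    using rho_lin[OF i, of f] eRQ_idem_mul[OF p] by (simp add: hom_add[OF f] hom_psc[OF f] eRQ_PA[OF p])
qed

lemma m_g_summand:
  assumes p: "p \<in> eRQ Q i" and a: "a \<in> darrs Q" "dhd Q a = i"
  shows "act (arrow Q a) (gmap Q act \<kappa> (bar a) p) + gmap Q act \<kappa> a (pmul Q (arrow Q (bar a)) p)
    = \<kappa> i (pmul Q (arrow Q a) (pmul Q (arrow Q (bar a)) p)) - act (arrow Q a) (act (arrow Q (bar a)) (\<kappa> i p))"
  using a p eRQ_arrow_mul[of "bar a" p] eRQ_PA[OF p]
  by (simp add: gmap_def ext_on_in act_vdiff PA_arrow)

lemma m_g_zero:
  assumes k: "\<kappa> \<in> S0"
  shows "mmap Q Q0' act (gmap Q act \<kappa>) = dzero"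
proof (intro ext)
  fix i p
  have "mmap Q Q0' act (gmap Q act \<kappa>) i p = 0" if i: "i \<in> Q0'" and p: "p \<in> eRQ Q i"
  proof -
    let ?A = "{a\<in>darrs Q. dhd Q a = i}"
    have iv: "i \<in> verts Q" using i Q0'_sub by auto
    note ki = S0_lin[OF k iv]
    have "mmap Q Q0' act (gmap Q act \<kappa>) i p = - (\<Sum>a\<in>?A. rs ((-1) ^ deg a)
        (\<kappa> i (pmul Q (arrow Q a) (pmul Q (arrow Q (bar a)) p))
          - act (arrow Q a) (act (arrow Q (bar a)) (\<kappa> i p))))"
      unfolding mmap_heads[OF i p] by (intro arg_cong[where f=uminus] sum.cong refl) (simp add: m_g_summand[OF p])
    also have "\<dots> =
        - ((\<Sum>a\<in>?A. rs ((-1) ^ deg a) (\<kappa> i (pmul Q (arrow Q a) (pmul Q (arrow Q (bar a)) p))))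
         - (\<Sum>a\<in>?A. rs ((-1) ^ deg a) (act (arrow Q a) (act (arrow Q (bar a)) (\<kappa> i p)))))"
      by (simp add: rs_vdiff sum_subtractf)
    also have "(\<Sum>a\<in>?A. rs ((-1) ^ deg a) (\<kappa> i (pmul Q (arrow Q a) (pmul Q (arrow Q (bar a)) p))))
        = - rs (- lam i) (\<kappa> i p)"
      by (rule hom_rho[OF i ki p])
    also have "(\<Sum>a\<in>?A. rs ((-1) ^ deg a) (act (arrow Q a) (act (arrow Q (bar a)) (\<kappa> i p))))
        = - rs (- lam i) (\<kappa> i p)"
      by (rule rho_act[OF i hom_V[OF ki p]])
    finally show ?thesis by simp
  qed
  then show "mmap Q Q0' act (gmap Q act \<kappa>) i p = dzero i p"
    by (auto simp: mmap_def ext_on_def dzero_def)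
qed

end

section \<open>Exactness at the second Hom term\<close>

text \<open>Given gamma, the candidate preimage under g on a path a_1 ... a_m starting at j is defined by
  recursion on the path: kappa(a p) = a kappa(p) + gamma_a(p), kappa(e_j) = 0; it is then extended
  linearly to the whole path algebra.\<close>
fun lift_path :: "('v,'e) quiver \<Rightarrow> (('v,'e,'r::comm_ring_1) pel \<Rightarrow> 'm::ab_group_add \<Rightarrow> 'm)
    \<Rightarrow> ('e darrow \<Rightarrow> ('v,'e,'r) pel \<Rightarrow> 'm) \<Rightarrow> 'v \<Rightarrow> 'e darrow list \<Rightarrow> 'm" where
  "lift_path Q act \<gamma> j [] = 0"
| "lift_path Q act \<gamma> j (a # l) = act (arrow Q a) (lift_path Q act \<gamma> j l) + \<gamma> a (basis (j, l))"

definition lift :: "('v,'e) quiver \<Rightarrow> (('v,'e,'r::comm_ring_1) pel \<Rightarrow> 'm::ab_group_add \<Rightarrow> 'm)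
    \<Rightarrow> ('e darrow \<Rightarrow> ('v,'e,'r) pel \<Rightarrow> 'm) \<Rightarrow> ('v,'e,'r) pel \<Rightarrow> 'm" where
  "lift Q act \<gamma> x = (\<Sum>q\<in>supp x. rscal Q act (x q) (lift_path Q act \<gamma> (fst q) (snd q)))"

locale m_kernel = A_mod Q Q0' lam act for Q :: "('v,'e) quiver" and Q0' lam
    and act :: "('v,'e,'r::comm_ring_1) pel \<Rightarrow> 'm::ab_group_add \<Rightarrow> 'm" +
  fixes \<gamma> :: "'e darrow \<Rightarrow> ('v,'e,'r) pel \<Rightarrow> 'm"
  assumes gS1: "\<gamma> \<in> DSum Q Q0' lam act (darrs Q) (dtl Q) (dhd Q)"
    and gm: "mmap Q Q0' act \<gamma> = dzero"
begin

abbreviation "K \<equiv> lift Q act \<gamma>"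
abbreviation "L \<equiv> lift_path Q act \<gamma>"

lemma gD: "a \<in> darrs Q \<Longrightarrow> lin_hom (dtl Q a) (dhd Q a) (\<gamma> a)"
  using S1_lin[OF gS1] .

lemma K_eq: "finite S \<Longrightarrow> supp x \<subseteq> S \<Longrightarrow> K x = (\<Sum>q\<in>S. rs (x q) (L (fst q) (snd q)))"
  unfolding lift_def by (rule sum.mono_neutral_left) (auto simp: supp_def rs_zero)

lemma K_add: "fs x \<Longrightarrow> fs y \<Longrightarrow> K (x + y) = K x + K y"
proof -
  assume x: "fs x" and y: "fs y"
  let ?S = "supp x \<union> supp y"
  have "K (x + y) = (\<Sum>q\<in>?S. rs ((x + y) q) (L (fst q) (snd q)))"
    by (rule K_eq) (use x y supp_add[of x y] in auto)
  also have "\<dots> = (\<Sum>q\<in>?S. rs (x q) (L (fst q) (snd q))) + (\<Sum>q\<in>?S. rs (y q) (L (fst q) (snd q)))"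
    by (simp add: plus_fun_apply rs_add sum.distrib)
  also have "\<dots> = K x + K y"
    using K_eq[of ?S x] K_eq[of ?S y] x y by auto
  finally show ?thesis .
qed

lemma K_psc: "fs x \<Longrightarrow> K (psc r x) = rs r (K x)"
proof -
  assume x: "fs x"
  have "K (psc r x) = (\<Sum>q\<in>supp x. rs (psc r x q) (L (fst q) (snd q)))"
    by (rule K_eq) (use x supp_psc in auto)
  then show ?thesis by (simp add: psc_def rs_mult rs_vsum lift_def)
qed

lemma K_basis: "K (basis q) = L (fst q) (snd q)"
  using K_eq[of "{q}" "basis q"] by (simp add: supp_basis basis_apply rs_one)

lemma K_zero: "K 0 = 0" by (simp add: lift_def supp_def zero_fun_apply)

lemma K_lin_sum:
  "(\<And>k. k \<in> A \<Longrightarrow> b k \<in> PA Q) \<Longrightarrow> K (\<Sum>k\<in>A. psc (c k) (b k)) = (\<Sum>k\<in>A. rs (c k) (K (b k)))"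
  using lin_sum[of "PA Q" K A b c] by (simp add: PA_zero PA_add PA_psc K_add K_psc PA_fs)

lemma L_V: "valid_path Q (j, l) \<Longrightarrow> L j l \<in> Vsub act (phead Q (j, l))"
proof (induction l)
  case Nil
  then show ?case by (simp add: valid_Nil phead_def V_zero)
next
  case (Cons a l)
  have a: "a \<in> darrs Q" and vl: "valid_path Q (j, l)" and t: "dtl Q a = phead Q (j, l)"
    using Cons(2) by (auto simp: valid_Cons)
  have hv: "dhd Q a \<in> verts Q" using darrs_ends[OF a] by auto
  have b: "(basis (j, l) :: ('v,'e,'r) pel) \<in> eRQ Q (dtl Q a)" using eRQ_basis[OF vl] t by simp
  have "act (arrow Q a) (L j l) \<in> Vsub act (dhd Q a)" by (rule act_in_V[OF hv eRQ_arrow[OF a]])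
  moreover have "\<gamma> a (basis (j, l)) \<in> Vsub act (dhd Q a)" by (rule hom_V[OF gD[OF a] b])
  ultimately show ?case using V_add[OF hv] by (simp add: phead_def)
qed

lemma K_V: "i \<in> verts Q \<Longrightarrow> x \<in> eRQ Q i \<Longrightarrow> K x \<in> Vsub act i"
  unfolding lift_def
proof (rule V_sum)
  fix q assume iv: "i \<in> verts Q" and x: "x \<in> eRQ Q i" and q: "q \<in> supp x"
  have "valid_path Q q" "phead Q q = i" using eRQ_supp[OF x q] by auto
  then have "L (fst q) (snd q) \<in> Vsub act i" using L_V[of "fst q" "snd q"] by simp
  then show "rs (x q) (L (fst q) (snd q)) \<in> Vsub act i" by (rule V_rs[OF iv])
qed

lemma K_arrow:
  assumes a: "a \<in> darrs Q" and u: "u \<in> eRQ Q (dtl Q a)"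
  shows "K (pmul Q (arrow Q a) u) = act (arrow Q a) (K u) + \<gamma> a u"
proof -
  have aPA: "arrow Q a \<in> PA Q" using PA_arrow[OF a] .
  have sq: "valid_path Q q \<and> phead Q q = dtl Q a" if "q \<in> supp u" for q using eRQ_supp[OF u that] .
  have "pmul Q (arrow Q a) u = (\<Sum>q\<in>supp u. psc (u q) (pmul Q (arrow Q a) (basis q)))"
    by (rule pmul_expand_right) (simp_all add: fs_arrow PA_fs[OF eRQ_PA[OF u]])
  also have "\<dots> = (\<Sum>q\<in>supp u. psc (u q) (basis (fst q, a # snd q)))"
  proof (rule sum.cong[OF refl])
    fix q assume q: "q \<in> supp u"
    have "dtl Q a = phead Q (fst q, snd q)" using sq[OF q] by simp
    then have "(pmul Q (arrow Q a) (basis (fst q, snd q)) :: ('v,'e,'r) pel) = basis (fst q, a # snd q)"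
      by (rule arrow_basis)
    then show "psc (u q) (pmul Q (arrow Q a) (basis q)) = psc (u q) (basis (fst q, a # snd q))"
      by simp
  qed
  finally have e: "pmul Q (arrow Q a) u = (\<Sum>q\<in>supp u. psc (u q) (basis (fst q, a # snd q)))" .
  have vb: "valid_path Q (fst q, a # snd q)" if "q \<in> supp u" for q
    using sq[OF that] a by (simp add: valid_Cons)
  have "K (pmul Q (arrow Q a) u) = (\<Sum>q\<in>supp u. rs (u q) (K (basis (fst q, a # snd q))))"
    unfolding e by (rule K_lin_sum) (simp add: vb PA_basis)
  also have "\<dots> = (\<Sum>q\<in>supp u. rs (u q) (act (arrow Q a) (L (fst q) (snd q)))) +
       (\<Sum>q\<in>supp u. rs (u q) (\<gamma> a (basis q)))"
    by (simp add: K_basis rs_v sum.distrib)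
  also have "(\<Sum>q\<in>supp u. rs (u q) (act (arrow Q a) (L (fst q) (snd q)))) = act (arrow Q a) (K u)"
    by (simp add: lift_def act_vsum[OF aPA] act_rs[OF aPA])
  also have "(\<Sum>q\<in>supp u. rs (u q) (\<gamma> a (basis q))) = \<gamma> a u"
    by (rule hom_expand[OF gD[OF a] u, symmetric])
  finally show ?thesis .
qed

lemma K_two_arrows:
  assumes a: "a \<in> darrs Q" and y: "y \<in> eRQ Q (dhd Q a)"
  shows "K (pmul Q (arrow Q a) (pmul Q (arrow Q (bar a)) y)) =
    act (arrow Q a) (act (arrow Q (bar a)) (K y))
    + (act (arrow Q a) (\<gamma> (bar a) y) + \<gamma> a (pmul Q (arrow Q (bar a)) y))"
proof -
  have ay: "pmul Q (arrow Q (bar a)) y \<in> eRQ Q (dtl Q a)"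
    using eRQ_arrow_mul[of "bar a" y] a eRQ_PA[OF y] by simp
  show ?thesis
    using K_arrow[OF a ay] K_arrow[of "bar a" y] a y act_v[OF PA_arrow[OF a]] by (simp add: add.assoc)
qed

text \<open>The key computation: K(rho_j y) = 0.  Expanding rho_j, the terms a abar K(y) add up to
  lambda_j K(y) because rho_j acts as zero on V, and the terms involving gamma add up to
  m(gamma)_j(y) = 0.\<close>
lemma K_rho:
  assumes j: "j \<in> Q0'" and y: "y \<in> PA Q"
  shows "K (pmul Q (rho Q lam j) y) = 0"
proof -
  let ?A = "{a\<in>darrs Q. dhd Q a = j}"
  have jv: "j \<in> verts Q" using j Q0'_sub by auto
  define yj where "yj = pmul Q (idem j) y"
  have yj: "yj \<in> eRQ Q j" unfolding yj_def by (rule eRQ_pmul[OF eRQ_idem[OF jv] y])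
  define w where "w = K yj"
  let ?T = "\<lambda>a. pmul Q (arrow Q a) (pmul Q (arrow Q (bar a)) yj)"
  have TPA: "?T a \<in> PA Q" if "a \<in> ?A" for a
    using that by (simp add: PA_pmul PA_arrow eRQ_PA[OF yj])
  have "pmul Q (rho Q lam j) y = (\<Sum>a\<in>?A. psc ((-1) ^ deg a) (?T a)) + psc (- lam j) yj"
    using rho_pmul[OF jv y] pmul_arrow_tl[OF y] by (simp add: yj_def)
  moreover have "fs (\<Sum>a\<in>?A. psc ((-1) ^ deg a) (?T a))"
    using TPA by (intro fs_sum fs_psc PA_fs) simp
  ultimately have "K (pmul Q (rho Q lam j) y) = K (\<Sum>a\<in>?A. psc ((-1) ^ deg a) (?T a)) + rs (- lam j) w"
    using PA_fs[OF eRQ_PA[OF yj]] by (simp add: K_add K_psc fs_psc w_def)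
  also have "K (\<Sum>a\<in>?A. psc ((-1) ^ deg a) (?T a)) = (\<Sum>a\<in>?A. rs ((-1) ^ deg a) (K (?T a)))"
    by (rule K_lin_sum) (rule TPA)
  also have "(\<Sum>a\<in>?A. rs ((-1) ^ deg a) (K (?T a))) =
     (\<Sum>a\<in>?A. rs ((-1) ^ deg a) (act (arrow Q a) (act (arrow Q (bar a)) w))) +
     (\<Sum>a\<in>?A. rs ((-1) ^ deg a) (act (arrow Q a) (\<gamma> (bar a) yj) + \<gamma> a (pmul Q (arrow Q (bar a)) yj)))"
    unfolding sum.distrib[symmetric] rs_v[symmetric]
  proof (rule sum.cong[OF refl])
    fix a assume "a \<in> ?A"
    then show "rs ((-1) ^ deg a) (K (?T a)) = rs ((-1) ^ deg a) (act (arrow Q a) (act (arrow Q (bar a)) w)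
        + (act (arrow Q a) (\<gamma> (bar a) yj) + \<gamma> a (pmul Q (arrow Q (bar a)) yj)))"
      using K_two_arrows[of a yj] yj by (simp add: w_def)
  qed
  also have "(\<Sum>a\<in>?A. rs ((-1) ^ deg a) (act (arrow Q a) (act (arrow Q (bar a)) w))) = - rs (- lam j) w"
    by (rule rho_act[OF j K_V[OF jv yj, folded w_def]])
  also have "(\<Sum>a\<in>?A. rs ((-1) ^ deg a) (act (arrow Q a) (\<gamma> (bar a) yj) + \<gamma> a (pmul Q (arrow Q (bar a)) yj))) = 0"
    using mmap_heads[OF j yj, of \<gamma>] gm by (simp add: dzero_def)
  finally show ?thesis by simp
qed

lemma K_path_mul:
  assumes u: "u \<in> I" "u \<in> eRQ Q j" and Ku: "K u = 0"
  shows "valid_path Q (j, l) \<Longrightarrow> K (pmul Q (basis (j, l)) u) = 0"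
proof (induction l)
  case Nil
  then show ?case using eRQ_idem_mul[OF u(2)] Ku by (simp add: idem_def)
next
  case (Cons a l)
  have a: "a \<in> darrs Q" and vl: "valid_path Q (j, l)" and t: "dtl Q a = phead Q (j, l)"
    using Cons(2) by (auto simp: valid_Cons)
  have uPA: "u \<in> PA Q" using eRQ_PA[OF u(2)] .
  have bPA: "(basis (j, l) :: ('v,'e,'r) pel) \<in> PA Q" using PA_basis[OF vl] .
  have "pmul Q (basis (j, a # l)) u = pmul Q (arrow Q a) (pmul Q (basis (j, l)) u)"
    unfolding arrow_basis[OF t, symmetric] by (rule pmul_assoc_PA[OF PA_arrow[OF a] bPA uPA])
  moreover have u'I: "pmul Q (basis (j, l)) u \<in> I" by (rule ideal_gen.lmul[OF bPA u(1)])
  moreover have u'E: "pmul Q (basis (j, l)) u \<in> eRQ Q (dtl Q a)"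
    using eRQ_pmul[OF eRQ_basis[OF vl] uPA] t by simp
  ultimately show ?case
    using K_arrow[OF a u'E] hom_I[OF gD[OF a] u'I u'E] act_v0[OF PA_arrow[OF a]] Cons(1)[OF vl] by simp
qed

text \<open>K vanishes on x (mu - lambda) y: split x into paths q, and insert e_j with j the tail of q.\<close>
lemma K_gen:
  assumes x: "x \<in> PA Q" and y: "y \<in> PA Q"
  shows "K (pmul Q x (pmul Q (rel Q Q0' lam) y)) = 0"
proof -
  let ?R = "rel Q Q0' lam"
  have RI: "?R \<in> I" by (rule ideal_gen.gen)
  define W where "W = pmul Q ?R y"
  have WPA: "W \<in> PA Q" unfolding W_def by (rule PA_pmul[OF ideal_PA[OF RI] y])
  have WI: "W \<in> I" unfolding W_def by (rule ideal_gen.rmul[OF y RI])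
  have "K (pmul Q (basis q) W) = 0" if q: "q \<in> supp x" for q
  proof -
    have vq: "valid_path Q q" using x q by (simp add: PA_iff)
    let ?j = "fst q"
    have jv: "?j \<in> verts Q" using valid_fst[OF vq] .
    have "(basis q :: ('v,'e,'r) pel) = pmul Q (basis q) (idem ?j)"
      by (rule ext) (simp add: pmul_idem_right fs_basis basis_apply)
    then have bW: "pmul Q (basis q) W = pmul Q (basis (?j, snd q)) (pmul Q (idem ?j) W)"
      by (metis pmul_assoc_PA PA_basis[OF vq] PA_idem[OF jv] WPA prod.collapse)
    have "pmul Q (idem ?j) W = pmul Q (pmul Q (idem ?j) ?R) y"
      unfolding W_def by (rule pmul_assoc_PA[symmetric, OF PA_idem[OF jv] ideal_PA[OF RI] y])
    then have "K (pmul Q (idem ?j) W) = 0"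
      using idem_rel[OF jv Q0'_sub, where lam=lam] K_rho[OF _ y] by (simp add: K_zero)
    then show ?thesis unfolding bW using vq
      by (intro K_path_mul ideal_gen.lmul[OF PA_idem[OF jv] WI] eRQ_pmul[OF eRQ_idem[OF jv] WPA])
        simp_all
  qed
  moreover have "pmul Q x W = (\<Sum>q\<in>supp x. psc (x q) (pmul Q (basis q) W))"
    by (rule pmul_expand_left) (simp_all add: PA_fs[OF x] PA_fs[OF WPA])
  moreover have "pmul Q (basis q) W \<in> PA Q" if "q \<in> supp x" for q
    using that x by (intro PA_pmul PA_basis WPA) (simp add: PA_iff)
  ultimately show ?thesis unfolding W_def[symmetric] by (simp add: K_lin_sum rs_v0)
qed

text \<open>K vanishes on x z y for every z in the ideal, by induction over the generation of the ideal;
  taking x = y = 1 shows that K kills the ideal.\<close>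
lemma K_ideal: "z \<in> I \<Longrightarrow> \<forall>x\<in>PA Q. \<forall>y\<in>PA Q. K (pmul Q x (pmul Q z y)) = 0"
proof (induction rule: ideal_gen.induct)
  case gen
  show ?case by (simp add: K_gen)
next
  case zero
  show ?case by (simp add: zero_fun_def[symmetric] K_zero)
next
  case (add z1 z2)
  have "K (pmul Q x (pmul Q (padd z1 z2) y)) = K (pmul Q x (pmul Q z1 y)) + K (pmul Q x (pmul Q z2 y))"
    if "x \<in> PA Q" "y \<in> PA Q" for x y
    using that ideal_PA[OF add(1)] ideal_PA[OF add(2)]
    by (simp add: padd_eq pmul_add_left pmul_add_right K_add fs_pmul PA_fs)
  then show ?case using add(3,4) by simp
next
  case (lmul x' z)
  then show ?case by (simp add: pmul_assoc_PA[symmetric] PA_pmul ideal_PA)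
next
  case (rmul x' z)
  then show ?case by (simp add: pmul_assoc_PA PA_pmul ideal_PA)
qed

lemma K_I: "z \<in> I \<Longrightarrow> K z = 0"
  using K_ideal[of z] PA_one ideal_PA[of z] by (metis pmul_one_left pmul_one_right PA_pmul)

lemma g_surj: "\<exists>\<kappa>\<in>S0. gmap Q act \<kappa> = \<gamma>"
proof
  define \<kappa> where "\<kappa> = (\<lambda>i. if i \<in> verts Q then ext_on (eRQ Q i) K else (\<lambda>_. 0))"
  have "lin_hom i i K" if i: "i \<in> verts Q" for i
    by (rule lin_homI) (simp_all add: K_V i K_add K_psc PA_fs[OF eRQ_PA] K_I)
  then show "\<kappa> \<in> S0" by (simp add: DSum_def \<kappa>_def HomA_ext)
  show "gmap Q act \<kappa> = \<gamma>"
  proof (intro ext)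
    fix a p
    show "gmap Q act \<kappa> a p = \<gamma> a p"
      using K_arrow[of a p] darrs_ends[of a] eRQ_arrow_mul[of a p] S1_out[OF gS1, of a]
        hom_out[OF S1_D[OF gS1], of a p]
      by (auto simp: gmap_def \<kappa>_def ext_on_def eRQ_PA)
  qed
qed

end

context A_mod
begin

lemma exact_at_S1: "gmap Q act ` S0 = {\<gamma>\<in>S1. mmap Q Q0' act \<gamma> = dzero}"
proof
  show "gmap Q act ` S0 \<subseteq> {\<gamma>\<in>S1. mmap Q Q0' act \<gamma> = dzero}"
    using g_wd m_g_zero by blast
  show "{\<gamma>\<in>S1. mmap Q Q0' act \<gamma> = dzero} \<subseteq> gmap Q act ` S0"
  proof
    fix \<gamma> assume g: "\<gamma> \<in> {\<gamma>\<in>S1. mmap Q Q0' act \<gamma> = dzero}"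
    interpret m_kernel Q Q0' lam act \<gamma> by unfold_locales (use g in auto)
    from g_surj show "\<gamma> \<in> gmap Q act ` S0" by force
  qed
qed

end

theorem proposition2p1:
  fixes Q :: "('v,'e) quiver"
    and Q0' :: "'v set"
    and lam :: "'v \<Rightarrow> 'r::comm_ring_1"
    and act :: "('v,'e,'r) pel \<Rightarrow> 'm::ab_group_add \<Rightarrow> 'm"
  assumes "finite (verts Q)" and "finite (arrs Q)"
    and "\<forall>a\<in>arrs Q. qtl Q a \<in> verts Q \<and> qhd Q a \<in> verts Q"
    and "Q0' \<subseteq> verts Q" and "Q0' \<noteq> {}"
    and "A_module Q Q0' lam act"
  defines "S0 \<equiv> DSum Q Q0' lam act (verts Q) id id"
    and "S1 \<equiv> DSum Q Q0' lam act (darrs Q) (dtl Q) (dhd Q)"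
    and "S2 \<equiv> DSum Q Q0' lam act Q0' id id"
  shows
    \<comment> \<open>the maps are well defined homomorphisms of left A-modules\<close>
    "(\<forall>v. epsmap Q act v \<in> S0)
   \<and> (\<forall>\<kappa>\<in>S0. gmap Q act \<kappa> \<in> S1)
   \<and> (\<forall>\<gamma>\<in>S1. mmap Q Q0' act \<gamma> \<in> S2)
   \<and> (\<forall>v w. epsmap Q act (v + w) = dplus (epsmap Q act v) (epsmap Q act w))
   \<and> (\<forall>x\<in>PA Q. \<forall>v. epsmap Q act (act x v) = hact Q id x (epsmap Q act v))
   \<and> (\<forall>\<kappa>\<in>S0. \<forall>\<kappa>'\<in>S0. gmap Q act (dplus \<kappa> \<kappa>') = dplus (gmap Q act \<kappa>) (gmap Q act \<kappa>'))
   \<and> (\<forall>x\<in>PA Q. \<forall>\<kappa>\<in>S0. gmap Q act (hact Q id x \<kappa>) = hact Q (dtl Q) x (gmap Q act \<kappa>))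
   \<and> (\<forall>\<gamma>\<in>S1. \<forall>\<gamma>'\<in>S1. mmap Q Q0' act (dplus \<gamma> \<gamma>') = dplus (mmap Q Q0' act \<gamma>) (mmap Q Q0' act \<gamma>'))
   \<and> (\<forall>x\<in>PA Q. \<forall>\<gamma>\<in>S1. mmap Q Q0' act (hact Q (dtl Q) x \<gamma>) = hact Q id x (mmap Q Q0' act \<gamma>))
    \<comment> \<open>exactness\<close>
   \<and> inj (epsmap Q act)
   \<and> range (epsmap Q act) = {\<kappa>\<in>S0. gmap Q act \<kappa> = dzero}
   \<and> gmap Q act ` S0 = {\<gamma>\<in>S1. mmap Q Q0' act \<gamma> = dzero}"
proof -
  interpret A_mod Q Q0' lam act
    by unfold_locales (use assms in auto)
  show ?thesis unfolding S0_def S1_def S2_def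
    using eps_wd g_wd m_wd eps_add eps_A_linear g_add g_A_linear m_add m_A_linear
      eps_inj exact_at_S0 exact_at_S1
    by blast
qed

end
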